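(* Consider the perturbed federated algorithm described in the context, with $\beta\in(0,1)$, run for $T\ge1$ rounds with constant step size $\gamma=[2L\sqrt{TE}]^{-1}$. Assume that the bounded variance, bounded stochastic gradient norm, $L$-smoothness and lower-bounded objective assumptions of the context hold. Let $\widehat{\mathbf{w}}_T$ be drawn uniformly at random from $\{\overline{\mathbf{w}}_{t,k}:0\le t\le T-1,\,0\le k\le E-1\}$. Then $$\mathbb{E}\|\nabla F(\widehat{\mathbf{w}}_T)\|^2\le\frac1{\sqrt T}\Big[\frac{4L\Delta}{\sqrt E}+\frac{S\sigma^2}{2\sqrt E}\Big]+\frac{EG^2}{T}\Big[4+(1-\beta)^2+8\Big(1-\frac1\beta\Big)^2\Big],$$ where $\Delta=F(\overline{\mathbf{w}}_{0,0})-f_{\inf}$ and $S=\sum_ip_i^2$.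
   Context: Setting: there are $C$ clients with local objectives $F_i:\mathbb{R}^D\to\mathbb{R}$. Similarity weights $p_{in}\ge0$ are symmetric, satisfy $p_{ii}=0$, and $\sum_{i,n}p_{in}=1$. Let $p_i=\sum_np_{in}>0$. The global objective is $F=\sum_ip_iF_i$. Algorithm, with parameter $\beta$, $E\ge1$ local steps and step sizes $\gamma_t$, all clients participating: - $\mathbf{u}^i_0=\overline{\mathbf{w}}_{0,0}$. - In round $t$, each client sets $\mathbf{w}^i_{t,0}=\overline{\mathbf{w}}_{t,0}$. For $k=0,\dots,E-1$ it forms $\widetilde{\mathbf{w}}^i_{t,k}=\beta\mathbf{w}^i_{t,k}+(1-\beta)\mathbf{u}^i_t$ and updates $\mathbf{w}^i_{t,k+1}=\mathbf{w}^i_{t,k}-\gamma_tg_i(\widetilde{\mathbf{w}}^i_{t,k})$, with stochastic gradients $g_i$ of $F_i$ sampled independently across clients and steps given the past. - $\overline{\mathbf{w}}_{t,k}=\sum_ip_i\mathbf{w}^i_{t,k}$ and $\overline{\mathbf{w}}_{t+1,0}=\overline{\mathbf{w}}_{t,E}$. - For $t\ge1$, $\mathbf{u}^i_t=\frac1{p_i}\sum_np_{in}\mathbf{w}^n_{t-1,E}$. $\mathbb{E}$ denotes total expectation. Assumptions: - Bounded variance: $\mathbb{E}\,g_i(\widetilde{\mathbf{w}}^i_{t,k})=\nabla F_i(\widetilde{\mathbf{w}}^i_{t,k})$ and $\mathbb{E}\|g_i(\widetilde{\mathbf{w}}^i_{t,k})-\nabla F_i(\widetilde{\mathbf{w}}^i_{t,k})\|^2\le\sigma^2$.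 - Bounded stochastic gradient norm: $\mathbb{E}\|g_i(\widetilde{\mathbf{w}}^i_{t,k})\|^2\le G^2$. - $L$-smoothness: each $\nabla F_i$ is $L$-Lipschitz. - Lower-bounded objective: $F\ge f_{\inf}$. *)

theory Defs
  imports "HOL-Probability.Probability"
begin

text \<open>Clients are indexed by 0..C-1. p i n are the similarity weights,
  pw p C i = p_i = sum_n p_in.\<close>

definition pw :: "(nat \<Rightarrow> nat \<Rightarrow> real) \<Rightarrow> nat \<Rightarrow> nat \<Rightarrow> real" where
  "pw p C i = (\<Sum>n<C. p i n)"

text \<open>Anchor u^i_t for t >= 1, computed from the previous round's final client
  iterates Wprev n = w^n_{t-1,E}.\<close>

definition anchor_of :: "nat \<Rightarrow> (nat \<Rightarrow> nat \<Rightarrow> real) \<Rightarrow> (nat \<Rightarrow> 'v::real_vector) \<Rightarrow> nat \<Rightarrow> 'v" where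
  "anchor_of C p Wprev i = (1 / pw p C i) *\<^sub>R (\<Sum>n<C. p i n *\<^sub>R Wprev n)"

text \<open>The stochastic gradient at step (t,k) is G i x (xi i t k), where xi i t k is the
  realised random sample of client i at round t, local step k.\<close>

fun local_iter :: "real \<Rightarrow> real \<Rightarrow> (nat \<Rightarrow> 'v::real_vector \<Rightarrow> 'x \<Rightarrow> 'v) \<Rightarrow>
    (nat \<Rightarrow> nat \<Rightarrow> nat \<Rightarrow> 'x) \<Rightarrow> nat \<Rightarrow> nat \<Rightarrow> 'v \<Rightarrow> 'v \<Rightarrow> nat \<Rightarrow> 'v" where
  "local_iter \<beta> \<gamma> G xi i t u w0 0 = w0"
| "local_iter \<beta> \<gamma> G xi i t u w0 (Suc k) =
     (let w = local_iter \<beta> \<gamma> G xi i t u w0 k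
      in w - \<gamma> *\<^sub>R G i (\<beta> *\<^sub>R w + (1 - \<beta>) *\<^sub>R u) (xi i t k))"

primrec client_iter :: "nat \<Rightarrow> (nat \<Rightarrow> nat \<Rightarrow> real) \<Rightarrow> real \<Rightarrow> real \<Rightarrow> nat \<Rightarrow>
    (nat \<Rightarrow> 'v::real_vector \<Rightarrow> 'x \<Rightarrow> 'v) \<Rightarrow> 'v \<Rightarrow> (nat \<Rightarrow> nat \<Rightarrow> nat \<Rightarrow> 'x) \<Rightarrow>
    nat \<Rightarrow> nat \<Rightarrow> nat \<Rightarrow> 'v" where
  "client_iter C p \<beta> \<gamma> E G w0 xi 0 = (\<lambda>i k. local_iter \<beta> \<gamma> G xi i 0 w0 w0 k)"
| "client_iter C p \<beta> \<gamma> E G w0 xi (Suc t) =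
     (let Wp = client_iter C p \<beta> \<gamma> E G w0 xi t;
          wb = (\<Sum>n<C. pw p C n *\<^sub>R Wp n E)
      in (\<lambda>i k. local_iter \<beta> \<gamma> G xi i (Suc t) (anchor_of C p (\<lambda>n. Wp n E) i) wb k))"

definition anchor :: "nat \<Rightarrow> (nat \<Rightarrow> nat \<Rightarrow> real) \<Rightarrow> real \<Rightarrow> real \<Rightarrow> nat \<Rightarrow>
    (nat \<Rightarrow> 'v::real_vector \<Rightarrow> 'x \<Rightarrow> 'v) \<Rightarrow> 'v \<Rightarrow> (nat \<Rightarrow> nat \<Rightarrow> nat \<Rightarrow> 'x) \<Rightarrow>
    nat \<Rightarrow> nat \<Rightarrow> 'v" where
  "anchor C p \<beta> \<gamma> E G w0 xi t i =
     (if t = 0 then w0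
      else anchor_of C p (\<lambda>n. client_iter C p \<beta> \<gamma> E G w0 xi (t - 1) n E) i)"

definition pert_iter :: "nat \<Rightarrow> (nat \<Rightarrow> nat \<Rightarrow> real) \<Rightarrow> real \<Rightarrow> real \<Rightarrow> nat \<Rightarrow>
    (nat \<Rightarrow> 'v::real_vector \<Rightarrow> 'x \<Rightarrow> 'v) \<Rightarrow> 'v \<Rightarrow> (nat \<Rightarrow> nat \<Rightarrow> nat \<Rightarrow> 'x) \<Rightarrow>
    nat \<Rightarrow> nat \<Rightarrow> nat \<Rightarrow> 'v" where
  "pert_iter C p \<beta> \<gamma> E G w0 xi t i k =
     \<beta> *\<^sub>R client_iter C p \<beta> \<gamma> E G w0 xi t i k + (1 - \<beta>) *\<^sub>R anchor C p \<beta> \<gamma> E G w0 xi t i"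

definition avg_iter :: "nat \<Rightarrow> (nat \<Rightarrow> nat \<Rightarrow> real) \<Rightarrow> real \<Rightarrow> real \<Rightarrow> nat \<Rightarrow>
    (nat \<Rightarrow> 'v::real_vector \<Rightarrow> 'x \<Rightarrow> 'v) \<Rightarrow> 'v \<Rightarrow> (nat \<Rightarrow> nat \<Rightarrow> nat \<Rightarrow> 'x) \<Rightarrow>
    nat \<Rightarrow> nat \<Rightarrow> 'v" where
  "avg_iter C p \<beta> \<gamma> E G w0 xi t k =
     (\<Sum>i<C. pw p C i *\<^sub>R client_iter C p \<beta> \<gamma> E G w0 xi t i k)"

end

theory Submission
  imports Defs
begin

text \<open>At every local step the averaged iterate moves along the \<open>p\<^sub>i\<close>-weighted mean of the
  clients' stochastic gradients, evaluated at their perturbed points. By the descent lemma for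
  the \<open>L\<close>-smooth \<open>F\<close>, and since each stochastic gradient is unbiased given the past, one step
  lowers the expected loss by \<open>\<gamma>/2\<close> times the expected squared gradient norm at the average, up
  to two errors. The variance of the mean stochastic gradient is at most \<open>S \<sigma>\<^sup>2\<close>, because the
  noises of different clients are orthogonal in \<open>L\<^sup>2\<close>. The dispersion of the perturbed points
  around the average enters through smoothness; it is bounded by the local drifts
  \<open>\<gamma> \<Sum>\<^sub>s g\<^sub>i\<close> of the current round and, through the anchors, of the previous round, each of
  second moment at most \<open>\<gamma>\<^sup>2 E\<^sup>2 G\<^sup>2\<close>. Telescoping over all \<open>T E\<close> steps, using the lower bound
  \<open>f\<^sub>i\<^sub>n\<^sub>f\<close> and inserting the step size gives the claim.\<close>

section \<open>Elementary inequalities\<close>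

lemma norm_add_sq_le:
  fixes a b :: "'v::real_normed_vector"
  shows "(norm (a + b))\<^sup>2 \<le> 2 * (norm a)\<^sup>2 + 2 * (norm b)\<^sup>2"
proof -
  have "(norm (a + b))\<^sup>2 \<le> (norm a + norm b)\<^sup>2"
    by (intro power_mono norm_triangle_ineq) auto
  also have "\<dots> \<le> 2 * (norm a)\<^sup>2 + 2 * (norm b)\<^sup>2"
    using sum_squares_bound[of "norm a" "norm b"] by (simp add: power2_sum)
  finally show ?thesis .
qed

lemma norm_diff_sq_le:
  fixes a b :: "'v::real_normed_vector"
  shows "(norm (a - b))\<^sup>2 \<le> 2 * (norm a)\<^sup>2 + 2 * (norm b)\<^sup>2"
  using norm_add_sq_le[of a "- b"] by simp

lemma norm_add3_sq_le:
  fixes x y z :: "'v::real_normed_vector"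
  shows "(norm (x + y + z))\<^sup>2 \<le> 3 * ((norm x)\<^sup>2 + (norm y)\<^sup>2 + (norm z)\<^sup>2)"
proof -
  have "(norm (x + y + z))\<^sup>2 \<le> (norm x + norm y + norm z)\<^sup>2"
    by (intro power_mono) (auto intro: order_trans[OF norm_triangle_ineq] add_right_mono)
  also have "\<dots> \<le> 3 * ((norm x)\<^sup>2 + (norm y)\<^sup>2 + (norm z)\<^sup>2)"
  proof -
    have "0 \<le> (norm x - norm y)\<^sup>2 + (norm y - norm z)\<^sup>2 + (norm x - norm z)\<^sup>2" by simp
    then show ?thesis by (simp add: power2_diff power2_sum algebra_simps)
  qed
  finally show ?thesis .
qed

lemma norm_weighted_sum_sq_le:
  fixes v :: "'i \<Rightarrow> 'v::real_normed_vector"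
  assumes c: "\<And>i. i \<in> A \<Longrightarrow> c i \<ge> 0"
  shows "(norm (\<Sum>i\<in>A. c i *\<^sub>R v i))\<^sup>2 \<le> (\<Sum>i\<in>A. c i) * (\<Sum>i\<in>A. c i * (norm (v i))\<^sup>2)"
proof -
  have "norm (\<Sum>i\<in>A. c i *\<^sub>R v i) \<le> (\<Sum>i\<in>A. c i * norm (v i))"
    using norm_sum[of "\<lambda>i. c i *\<^sub>R v i" A] c by (simp add: abs_of_nonneg)
  then have "(norm (\<Sum>i\<in>A. c i *\<^sub>R v i))\<^sup>2 \<le> (\<Sum>i\<in>A. c i * norm (v i))\<^sup>2"
    by (intro power_mono) auto
  also have "(\<Sum>i\<in>A. c i * norm (v i)) = (\<Sum>i\<in>A. sqrt (c i) * (sqrt (c i) * norm (v i)))"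
    using c by (intro sum.cong) (auto simp: real_sqrt_mult_self mult.assoc[symmetric])
  also have "(\<dots>)\<^sup>2 \<le> (\<Sum>i\<in>A. (sqrt (c i))\<^sup>2) * (\<Sum>i\<in>A. (sqrt (c i) * norm (v i))\<^sup>2)"
    by (rule Cauchy_Schwarz_ineq_sum)
  also have "\<dots> = (\<Sum>i\<in>A. c i) * (\<Sum>i\<in>A. c i * (norm (v i))\<^sup>2)"
    using c by (intro arg_cong2[where f="(*)"] sum.cong) (auto simp: power_mult_distrib)
  finally show ?thesis .
qed

lemma lipschitz_gradient_quadratic_bounds:
  fixes f :: "'v::real_inner \<Rightarrow> real"
  assumes deriv: "\<And>x. (f has_derivative (\<lambda>h. g x \<bullet> h)) (at x)"
    and lip: "L-lipschitz_on UNIV g"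
  shows "f y \<le> f x + g x \<bullet> (y - x) + L / 2 * (norm (y - x))\<^sup>2"
    and "f y \<ge> f x + g x \<bullet> (y - x) - L / 2 * (norm (y - x))\<^sup>2"
proof -
  define h where "h = y - x"
  have along: "((\<lambda>s. f (x + s *\<^sub>R h)) has_real_derivative (g (x + s *\<^sub>R h) \<bullet> h)) (at s)" for s
  proof -
    have "((\<lambda>s. x + s *\<^sub>R h) has_derivative (\<lambda>t. t *\<^sub>R h)) (at s)"
      by (auto intro!: derivative_eq_intros)
    from has_derivative_compose[OF this deriv]
    show ?thesis by (rule has_derivative_imp_has_field_derivative) simp
  qed
  have slope: "\<bar>g (x + s *\<^sub>R h) \<bullet> h - g x \<bullet> h\<bar> \<le> L * s * (norm h)\<^sup>2" if "0 \<le> s" for s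
  proof -
    have "\<bar>(g (x + s *\<^sub>R h) - g x) \<bullet> h\<bar> \<le> norm (g (x + s *\<^sub>R h) - g x) * norm h"
      by (rule Cauchy_Schwarz_ineq2)
    also have "\<dots> \<le> L * norm (s *\<^sub>R h) * norm h"
      using lipschitz_onD[OF lip, of "x + s *\<^sub>R h" x] by (intro mult_right_mono) (auto simp: dist_norm)
    also have "\<dots> = L * s * (norm h)\<^sup>2" using that by (simp add: power2_eq_square)
    finally show ?thesis by (simp add: inner_diff_left)
  qed
  define \<psi> where "\<psi> = (\<lambda>s. f (x + s *\<^sub>R h) - s * (g x \<bullet> h) - L / 2 * s\<^sup>2 * (norm h)\<^sup>2)"
  have "\<psi> 1 \<le> \<psi> 0"
  proof (rule DERIV_nonpos_imp_nonincreasing[of 0 1])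
    fix s :: real assume s: "0 \<le> s" "s \<le> 1"
    have "(\<psi> has_real_derivative (g (x + s *\<^sub>R h) \<bullet> h - g x \<bullet> h - L * s * (norm h)\<^sup>2)) (at s)"
      unfolding \<psi>_def by (rule derivative_eq_intros along refl | simp)+
    with slope[OF s(1)] show "\<exists>y. DERIV \<psi> s :> y \<and> y \<le> 0" by fastforce
  qed simp
  then show "f y \<le> f x + g x \<bullet> (y - x) + L / 2 * (norm (y - x))\<^sup>2"
    unfolding \<psi>_def h_def by simp
  define \<phi> where "\<phi> = (\<lambda>s. f (x + s *\<^sub>R h) - s * (g x \<bullet> h) + L / 2 * s\<^sup>2 * (norm h)\<^sup>2)"
  have "\<phi> 0 \<le> \<phi> 1"
  proof (rule DERIV_nonneg_imp_nondecreasing[of 0 1])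
    fix s :: real assume s: "0 \<le> s" "s \<le> 1"
    have "(\<phi> has_real_derivative (g (x + s *\<^sub>R h) \<bullet> h - g x \<bullet> h + L * s * (norm h)\<^sup>2)) (at s)"
      unfolding \<phi>_def by (rule derivative_eq_intros along refl | simp)+
    with slope[OF s(1)] show "\<exists>y. DERIV \<phi> s :> y \<and> y \<ge> 0" by fastforce
  qed simp
  then show "f y \<ge> f x + g x \<bullet> (y - x) - L / 2 * (norm (y - x))\<^sup>2"
    unfolding \<phi>_def h_def by simp
qed

lemma abs_inner_le_norm_sq_add:
  fixes x y :: "'v::real_inner"
  shows "\<bar>x \<bullet> y\<bar> \<le> (norm x)\<^sup>2 + (norm y)\<^sup>2"
proof -
  have "2 * (norm x * norm y) \<le> (norm x)\<^sup>2 + (norm y)\<^sup>2"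
    using sum_squares_bound[of "norm x" "norm y"] by (simp add: mult.assoc)
  moreover have "0 \<le> norm x * norm y" by simp
  ultimately show ?thesis using Cauchy_Schwarz_ineq2[of x y] by linarith
qed

section \<open>Square-integrable random vectors\<close>

definition sq_integrable :: "'a measure \<Rightarrow> ('a \<Rightarrow> 'v::real_normed_vector) \<Rightarrow> bool" where
  "sq_integrable M f \<longleftrightarrow> f \<in> borel_measurable M \<and> integrable M (\<lambda>\<omega>. (norm (f \<omega>))\<^sup>2)"

lemma sq_integrableD:
  "sq_integrable M f \<Longrightarrow> f \<in> borel_measurable M"
  "sq_integrable M f \<Longrightarrow> integrable M (\<lambda>\<omega>. (norm (f \<omega>))\<^sup>2)"
  by (simp_all add: sq_integrable_def)

lemma integrable_abs_le:
  fixes g :: "'a \<Rightarrow> real"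
  assumes "integrable M f" "g \<in> borel_measurable M" "\<And>\<omega>. \<omega> \<in> space M \<Longrightarrow> \<bar>g \<omega>\<bar> \<le> f \<omega>"
  shows "integrable M g"
proof (rule Bochner_Integration.integrable_bound[OF assms(1,2)])
  show "AE \<omega> in M. norm (g \<omega>) \<le> norm (f \<omega>)"
    using assms(3) by (intro AE_I2) (metis abs_ge_self order_trans real_norm_def)
qed

lemma (in finite_measure) sq_integrable_const [simp, intro]: "sq_integrable M (\<lambda>_. c)"
  by (simp add: sq_integrable_def)

lemma sq_integrable_add [intro]:
  fixes f g :: "'a \<Rightarrow> 'v::{real_normed_vector, second_countable_topology}"
  assumes "sq_integrable M f" "sq_integrable M g"
  shows "sq_integrable M (\<lambda>\<omega>. f \<omega> + g \<omega>)"
proof -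
  have "integrable M (\<lambda>\<omega>. (norm (f \<omega> + g \<omega>))\<^sup>2)"
    by (rule integrable_abs_le[of _ "\<lambda>\<omega>. 2 * (norm (f \<omega>))\<^sup>2 + 2 * (norm (g \<omega>))\<^sup>2"])
       (use assms norm_add_sq_le in \<open>auto simp: sq_integrable_def\<close>)
  with assms show ?thesis by (auto simp: sq_integrable_def)
qed

lemma sq_integrable_scaleR [intro]:
  fixes f :: "'a \<Rightarrow> 'v::{real_normed_vector, second_countable_topology}"
  shows "sq_integrable M f \<Longrightarrow> sq_integrable M (\<lambda>\<omega>. c *\<^sub>R f \<omega>)"
  by (auto simp: sq_integrable_def power_mult_distrib)

lemma sq_integrable_diff [intro]:
  fixes f g :: "'a \<Rightarrow> 'v::{real_normed_vector, second_countable_topology}"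
  assumes "sq_integrable M f" "sq_integrable M g"
  shows "sq_integrable M (\<lambda>\<omega>. f \<omega> - g \<omega>)"
  using sq_integrable_add[OF assms(1) sq_integrable_scaleR[OF assms(2), of "-1"]] by simp

lemma sq_integrable_sum [intro]:
  fixes f :: "'i \<Rightarrow> 'a \<Rightarrow> 'v::{real_normed_vector, second_countable_topology}"
  shows "(\<And>i. i \<in> A \<Longrightarrow> sq_integrable M (f i)) \<Longrightarrow> sq_integrable M (\<lambda>\<omega>. \<Sum>i\<in>A. f i \<omega>)"
proof (induction A rule: infinite_finite_induct)
  case (infinite A)
  then show ?case by (simp add: sq_integrable_def)
next
  case (insert x A)
  then show ?case using sq_integrable_add[where f = "f x" and g = "\<lambda>\<omega>. \<Sum>i\<in>A. f i \<omega>"] by simp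
qed (simp add: sq_integrable_def)

lemma sq_integrable_integrable_inner:
  fixes f g :: "'a \<Rightarrow> 'v::{real_inner, second_countable_topology}"
  assumes f: "sq_integrable M f" and g: "sq_integrable M g"
  shows "integrable M (\<lambda>\<omega>. f \<omega> \<bullet> g \<omega>)"
proof (rule integrable_abs_le[of _ "\<lambda>\<omega>. (norm (f \<omega>))\<^sup>2 + (norm (g \<omega>))\<^sup>2"])
  show "integrable M (\<lambda>\<omega>. (norm (f \<omega>))\<^sup>2 + (norm (g \<omega>))\<^sup>2)"
    using f g by (auto simp: sq_integrable_def)
  show "(\<lambda>\<omega>. f \<omega> \<bullet> g \<omega>) \<in> borel_measurable M"
    using f g by (auto simp: sq_integrable_def)
qed (rule abs_inner_le_norm_sq_add)

lemma borel_measurable_lipschitz_comp: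
  fixes h :: "'v::metric_space \<Rightarrow> 'w::metric_space"
  assumes "L-lipschitz_on UNIV h" "f \<in> borel_measurable M"
  shows "(\<lambda>\<omega>. h (f \<omega>)) \<in> borel_measurable M"
  using borel_measurable_continuous_on[OF lipschitz_on_continuous_on[OF assms(1)] assms(2)] .

lemma (in finite_measure) sq_integrable_lipschitz_comp:
  fixes h :: "'v::{real_normed_vector, second_countable_topology} \<Rightarrow> 'w::{real_normed_vector, second_countable_topology}"
  assumes lip: "L-lipschitz_on UNIV h" and f: "sq_integrable M f"
  shows "sq_integrable M (\<lambda>\<omega>. h (f \<omega>))"
proof -
  have meas: "(\<lambda>\<omega>. h (f \<omega>)) \<in> borel_measurable M"
    using borel_measurable_lipschitz_comp[OF lip sq_integrableD(1)[OF f]] .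
  have bound: "(norm (h (f \<omega>)))\<^sup>2 \<le> 2 * (norm (h 0))\<^sup>2 + 2 * L\<^sup>2 * (norm (f \<omega>))\<^sup>2" for \<omega>
  proof -
    have "(norm (h (f \<omega>)))\<^sup>2 = (norm (h 0 + (h (f \<omega>) - h 0)))\<^sup>2" by simp
    also have "\<dots> \<le> 2 * (norm (h 0))\<^sup>2 + 2 * (norm (h (f \<omega>) - h 0))\<^sup>2" by (rule norm_add_sq_le)
    also have "(norm (h (f \<omega>) - h 0))\<^sup>2 \<le> (L * norm (f \<omega>))\<^sup>2"
      using lipschitz_onD[OF lip, of "f \<omega>" 0] by (intro power_mono) (auto simp: dist_norm)
    finally show ?thesis by (simp add: power_mult_distrib)
  qed
  have "integrable M (\<lambda>\<omega>. (norm (h (f \<omega>)))\<^sup>2)"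
    by (rule integrable_abs_le[of _ "\<lambda>\<omega>. 2 * (norm (h 0))\<^sup>2 + 2 * L\<^sup>2 * (norm (f \<omega>))\<^sup>2"])
       (use sq_integrableD(2)[OF f] meas bound in auto)
  with meas show ?thesis by (simp add: sq_integrable_def)
qed

lemma (in finite_measure) integrable_lipschitz_gradient_comp:
  fixes f :: "'v::{real_inner, second_countable_topology} \<Rightarrow> real"
  assumes deriv: "\<And>x. (f has_derivative (\<lambda>h. g x \<bullet> h)) (at x)"
    and lip: "L-lipschitz_on UNIV g" and X: "sq_integrable M X"
  shows "integrable M (\<lambda>\<omega>. f (X \<omega>))"
proof -
  have "continuous_on UNIV f"
    using deriv by (intro continuous_at_imp_continuous_on ballI has_derivative_continuous) blast
  then have meas: "(\<lambda>\<omega>. f (X \<omega>)) \<in> borel_measurable M"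
    using borel_measurable_continuous_on sq_integrableD(1)[OF X] by blast
  have L: "0 \<le> L" using lipschitz_on_nonneg[OF lip] .
  have bound: "\<bar>f y\<bar> \<le> \<bar>f 0\<bar> + (norm (g 0))\<^sup>2 + (1 + L) * (norm y)\<^sup>2" for y
  proof -
    have "f y \<le> f 0 + g 0 \<bullet> y + L / 2 * (norm y)\<^sup>2"
      and "f y \<ge> f 0 + g 0 \<bullet> y - L / 2 * (norm y)\<^sup>2"
      using lipschitz_gradient_quadratic_bounds[OF deriv lip, where x = 0 and y = y] by simp_all
    moreover have "\<bar>g 0 \<bullet> y\<bar> \<le> (norm (g 0))\<^sup>2 + (norm y)\<^sup>2"
      by (rule abs_inner_le_norm_sq_add)
    moreover have "0 \<le> L / 2 * (norm y)\<^sup>2" "L / 2 * (norm y)\<^sup>2 \<le> L * (norm y)\<^sup>2"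
      using L by simp_all
    ultimately show ?thesis unfolding distrib_right by linarith
  qed
  show ?thesis
    by (rule integrable_abs_le[of _ "\<lambda>\<omega>. \<bar>f 0\<bar> + (norm (g 0))\<^sup>2 + (1 + L) * (norm (X \<omega>))\<^sup>2"])
       (use sq_integrableD(2)[OF X] meas bound in auto)
qed

lemma integral_norm_sq_add_orthogonal_sum:
  fixes b :: "'a \<Rightarrow> 'v::{real_inner, second_countable_topology}" and x :: "'i \<Rightarrow> 'a \<Rightarrow> 'v"
  assumes A: "finite A" and b: "sq_integrable M b" and x: "\<And>i. i \<in> A \<Longrightarrow> sq_integrable M (x i)"
    and orth_b: "\<And>i. i \<in> A \<Longrightarrow> (\<integral>\<omega>. b \<omega> \<bullet> x i \<omega> \<partial>M) = 0"
    and orth_x: "\<And>i j. i \<in> A \<Longrightarrow> j \<in> A \<Longrightarrow> i \<noteq> j \<Longrightarrow> (\<integral>\<omega>. x i \<omega> \<bullet> x j \<omega> \<partial>M) = 0"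
  shows "(\<integral>\<omega>. (norm (b \<omega> + (\<Sum>i\<in>A. c i *\<^sub>R x i \<omega>)))\<^sup>2 \<partial>M)
       = (\<integral>\<omega>. (norm (b \<omega>))\<^sup>2 \<partial>M) + (\<Sum>i\<in>A. (c i)\<^sup>2 * (\<integral>\<omega>. (norm (x i \<omega>))\<^sup>2 \<partial>M))"
proof -
  have int_bx: "\<And>i. i \<in> A \<Longrightarrow> integrable M (\<lambda>\<omega>. b \<omega> \<bullet> x i \<omega>)"
    and int_xx: "\<And>i j. i \<in> A \<Longrightarrow> j \<in> A \<Longrightarrow> integrable M (\<lambda>\<omega>. x i \<omega> \<bullet> x j \<omega>)"
    using sq_integrable_integrable_inner b x by blast+
  have expand: "(norm (b \<omega> + (\<Sum>i\<in>A. c i *\<^sub>R x i \<omega>)))\<^sup>2 = (norm (b \<omega>))\<^sup>2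
      + 2 * (\<Sum>i\<in>A. c i * (b \<omega> \<bullet> x i \<omega>)) + (\<Sum>i\<in>A. \<Sum>j\<in>A. c i * c j * (x i \<omega> \<bullet> x j \<omega>))" for \<omega>
    by (simp add: power2_norm_eq_inner inner_add_left inner_add_right inner_sum_left inner_sum_right
        inner_commute sum_distrib_left mult.assoc mult.left_commute)
  have cross: "(\<integral>\<omega>. (\<Sum>i\<in>A. c i * (b \<omega> \<bullet> x i \<omega>)) \<partial>M) = 0"
    using int_bx orth_b by (simp add: Bochner_Integration.integral_sum)
  have diagonal: "(\<integral>\<omega>. (\<Sum>i\<in>A. \<Sum>j\<in>A. c i * c j * (x i \<omega> \<bullet> x j \<omega>)) \<partial>M)
      = (\<Sum>i\<in>A. (c i)\<^sup>2 * (\<integral>\<omega>. (norm (x i \<omega>))\<^sup>2 \<partial>M))"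
  proof -
    have "(\<integral>\<omega>. (\<Sum>i\<in>A. \<Sum>j\<in>A. c i * c j * (x i \<omega> \<bullet> x j \<omega>)) \<partial>M)
        = (\<Sum>i\<in>A. \<Sum>j\<in>A. c i * c j * (\<integral>\<omega>. x i \<omega> \<bullet> x j \<omega> \<partial>M))"
      using int_xx by (simp add: Bochner_Integration.integral_sum integrable_sum)
    also have "\<dots> = (\<Sum>i\<in>A. \<Sum>j\<in>A. if j = i then (c i)\<^sup>2 * (\<integral>\<omega>. x i \<omega> \<bullet> x i \<omega> \<partial>M) else 0)"
      using orth_x by (intro sum.cong refl) (auto simp: power2_eq_square)
    also have "\<dots> = (\<Sum>i\<in>A. (c i)\<^sup>2 * (\<integral>\<omega>. x i \<omega> \<bullet> x i \<omega> \<partial>M))"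
      using A by simp
    finally show ?thesis by (simp add: power2_norm_eq_inner)
  qed
  have "integrable M (\<lambda>\<omega>. 2 * (\<Sum>i\<in>A. c i * (b \<omega> \<bullet> x i \<omega>)))"
    and "integrable M (\<lambda>\<omega>. \<Sum>i\<in>A. \<Sum>j\<in>A. c i * c j * (x i \<omega> \<bullet> x j \<omega>))"
    using int_bx int_xx by auto
  with sq_integrableD(2)[OF b] show ?thesis
    unfolding expand using cross diagonal by simp
qed

section \<open>Integrating out an independent sample\<close>

lemma (in prob_space) integral_indep_var_iterated:
  fixes N1 N2 :: "'b measure" and h :: "'b \<times> 'b \<Rightarrow> real"
  assumes indep: "indep_var N1 Z N2 Z'" and h: "h \<in> borel_measurable (N1 \<Otimes>\<^sub>M N2)"
    and int: "integrable M (\<lambda>\<omega>. h (Z \<omega>, Z' \<omega>))"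
  shows "(\<integral>\<omega>. h (Z \<omega>, Z' \<omega>) \<partial>M) = (\<integral>\<omega>. (\<integral>\<omega>'. h (Z \<omega>, Z' \<omega>') \<partial>M) \<partial>M)"
proof -
  define D1 where "D1 = distr M N1 Z"
  define D2 where "D2 = distr M N2 Z'"
  have Z [measurable]: "Z \<in> M \<rightarrow>\<^sub>M N1" and Z' [measurable]: "Z' \<in> M \<rightarrow>\<^sub>M N2"
    and joint: "D1 \<Otimes>\<^sub>M D2 = distr M (N1 \<Otimes>\<^sub>M N2) (\<lambda>\<omega>. (Z \<omega>, Z' \<omega>))"
    using indep_var_distribution_eq[of N1 Z N2 Z'] indep unfolding D1_def D2_def by auto
  interpret D1: prob_space D1 unfolding D1_def by (rule prob_space_distr) simp
  interpret D2: prob_space D2 unfolding D2_def by (rule prob_space_distr) simp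
  interpret pair_prob_space D1 D2 by unfold_locales
  have "integrable (D1 \<Otimes>\<^sub>M D2) h"
    unfolding joint using int h by (subst integrable_distr_eq) auto
  have "(\<integral>\<omega>. h (Z \<omega>, Z' \<omega>) \<partial>M) = integral\<^sup>L (D1 \<Otimes>\<^sub>M D2) h"
    unfolding joint using h by (subst integral_distr) auto
  also have "\<dots> = (\<integral>z. (\<integral>z'. h (z, z') \<partial>D2) \<partial>D1)"
    using integral_fst'[OF \<open>integrable (D1 \<Otimes>\<^sub>M D2) h\<close>] by simp
  also have "\<dots> = (\<integral>\<omega>. (\<integral>z'. h (Z \<omega>, z') \<partial>D2) \<partial>M)"
    unfolding D1_def
    using D2.borel_measurable_lebesgue_integral[of "\<lambda>z z'. h (z, z')" N1] h
    by (subst integral_distr) (auto simp: D2_def)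
  also have "\<dots> = (\<integral>\<omega>. (\<integral>\<omega>'. h (Z \<omega>, Z' \<omega>') \<partial>M) \<partial>M)"
  proof (rule Bochner_Integration.integral_cong[OF refl])
    fix \<omega> assume "\<omega> \<in> space M"
    then have "Z \<omega> \<in> space N1" by (rule measurable_space[OF Z])
    then show "(\<integral>z'. h (Z \<omega>, z') \<partial>D2) = (\<integral>\<omega>'. h (Z \<omega>, Z' \<omega>') \<partial>M)"
      unfolding D2_def using h by (subst integral_distr) auto
  qed
  finally show ?thesis .
qed

lemma (in prob_space) integral_indep_vars_fresh:
  fixes h :: "('j \<Rightarrow> 'x) \<times> 'x \<Rightarrow> real"
  assumes indep: "indep_vars (\<lambda>_. X) Y I" and J: "J \<subseteq> I" "j0 \<in> I" "j0 \<notin> J"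
    and h: "h \<in> borel_measurable (PiM J (\<lambda>_. X) \<Otimes>\<^sub>M X)"
    and int: "integrable M (\<lambda>\<omega>. h (restrict (\<lambda>j. Y j \<omega>) J, Y j0 \<omega>))"
  shows "(\<integral>\<omega>. h (restrict (\<lambda>j. Y j \<omega>) J, Y j0 \<omega>) \<partial>M)
       = (\<integral>\<omega>. (\<integral>\<omega>'. h (restrict (\<lambda>j. Y j \<omega>) J, Y j0 \<omega>') \<partial>M) \<partial>M)"
proof -
  define h' where "h' = (\<lambda>(z, z'::'j \<Rightarrow> 'x). h (z, z' j0))"
  have indep_pair: "indep_var (PiM J (\<lambda>_. X)) (\<lambda>\<omega>. restrict (\<lambda>j. Y j \<omega>) J)
      (PiM {j0} (\<lambda>_. X)) (\<lambda>\<omega>. restrict (\<lambda>j. Y j \<omega>) {j0})"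
    using indep_var_restrict[OF indep, of J "{j0}"] J by auto
  have h': "h' \<in> borel_measurable (PiM J (\<lambda>_. X) \<Otimes>\<^sub>M PiM {j0} (\<lambda>_. X))"
  proof -
    have "(\<lambda>(z, z'::'j \<Rightarrow> 'x). (z, z' j0))
        \<in> PiM J (\<lambda>_. X) \<Otimes>\<^sub>M PiM {j0} (\<lambda>_. X) \<rightarrow>\<^sub>M PiM J (\<lambda>_. X) \<Otimes>\<^sub>M X"
      by measurable
    from measurable_compose[OF this h] show ?thesis unfolding h'_def by (simp add: case_prod_beta')
  qed
  show ?thesis
    using integral_indep_var_iterated[OF indep_pair h'] int by (simp add: h'_def)
qed

section \<open>The iterates as functions of the samples\<close>

lemma client_iter_Suc:
  "client_iter C p \<beta> \<gamma> E G w0 xi t i (Suc k) =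
   client_iter C p \<beta> \<gamma> E G w0 xi t i k - \<gamma> *\<^sub>R G i (pert_iter C p \<beta> \<gamma> E G w0 xi t i k) (xi i t k)"
  by (cases t) (simp_all add: Let_def pert_iter_def anchor_def)

lemma client_iter_0:
  "client_iter C p \<beta> \<gamma> E G w0 xi t i 0 =
   (if t = 0 then w0 else (\<Sum>n<C. pw p C n *\<^sub>R client_iter C p \<beta> \<gamma> E G w0 xi (t - 1) n E))"
  by (cases t) (simp_all add: Let_def)

lemma anchor_Suc:
  "anchor C p \<beta> \<gamma> E G w0 xi (Suc t) i =
   (1 / pw p C i) *\<^sub>R (\<Sum>n<C. p i n *\<^sub>R client_iter C p \<beta> \<gamma> E G w0 xi t n E)"
  by (simp add: anchor_def anchor_of_def)

declare client_iter.simps [simp del]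

definition past :: "nat \<Rightarrow> nat \<Rightarrow> nat \<Rightarrow> nat \<Rightarrow> (nat \<times> nat \<times> nat) set" where
  "past C E t k = {(i, s, l). i < C \<and> (s < t \<and> l < E \<or> s = t \<and> l < k)}"

lemma past_mono_Suc_round: "(i, s, l) \<in> past C E t E \<Longrightarrow> (i, s, l) \<in> past C E (Suc t) k"
  by (auto simp: past_def)

lemma client_iter_anchor_cong:
  assumes "\<And>i' s l. (i', s, l) \<in> past C E t k \<Longrightarrow> xa i' s l = xb i' s l" and "i < C"
  shows "client_iter C p \<beta> \<gamma> E G w0 xa t i k = client_iter C p \<beta> \<gamma> E G w0 xb t i k
    \<and> anchor C p \<beta> \<gamma> E G w0 xa t i = anchor C p \<beta> \<gamma> E G w0 xb t i"
  using assms
proof (induction t arbitrary: i k)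
  case 0
  have anchor_eq: "anchor C p \<beta> \<gamma> E G w0 xa 0 i = anchor C p \<beta> \<gamma> E G w0 xb 0 i"
    by (simp add: anchor_def)
  have "client_iter C p \<beta> \<gamma> E G w0 xa 0 i l = client_iter C p \<beta> \<gamma> E G w0 xb 0 i l" if "l \<le> k" for l
    using that
  proof (induction l)
    case (Suc l)
    with "0.prems" anchor_eq show ?case by (simp add: client_iter_Suc pert_iter_def past_def)
  qed (simp add: client_iter_0)
  with anchor_eq show ?case by simp
next
  case (Suc t)
  have "\<And>i' s l. (i', s, l) \<in> past C E t E \<Longrightarrow> xa i' s l = xb i' s l"
    using Suc.prems(1) past_mono_Suc_round by blast
  then have prev: "client_iter C p \<beta> \<gamma> E G w0 xa t n E = client_iter C p \<beta> \<gamma> E G w0 xb t n E"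
    if "n < C" for n
    using Suc.IH that by blast
  have anchor_eq: "anchor C p \<beta> \<gamma> E G w0 xa (Suc t) i = anchor C p \<beta> \<gamma> E G w0 xb (Suc t) i"
    by (simp add: anchor_Suc prev)
  note hyps = Suc.prems
  have "client_iter C p \<beta> \<gamma> E G w0 xa (Suc t) i l = client_iter C p \<beta> \<gamma> E G w0 xb (Suc t) i l"
    if "l \<le> k" for l
    using that
  proof (induction l)
    case (Suc l)
    with hyps anchor_eq show ?case
      by (simp add: client_iter_Suc pert_iter_def past_def)
  qed (simp add: client_iter_0 prev)
  with anchor_eq show ?case by simp
qed

lemma measurable_Pair_comp:
  assumes "(\<lambda>(w, x). G w x) \<in> borel \<Otimes>\<^sub>M X \<rightarrow>\<^sub>M borel"
    and "f \<in> borel_measurable N" and "h \<in> N \<rightarrow>\<^sub>M X"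
  shows "(\<lambda>n. G (f n) (h n)) \<in> borel_measurable N"
  using measurable_compose[OF measurable_Pair[OF assms(2,3)] assms(1)] by simp

lemma client_iter_anchor_measurable:
  fixes G :: "nat \<Rightarrow> 'v::euclidean_space \<Rightarrow> 'x \<Rightarrow> 'v"
  assumes G: "\<And>i. i < C \<Longrightarrow> (\<lambda>(w, x). G i w x) \<in> borel \<Otimes>\<^sub>M X \<rightarrow>\<^sub>M borel"
    and samples: "\<And>i' s l. (i', s, l) \<in> past C E t k \<Longrightarrow> (\<lambda>n. \<Phi> n i' s l) \<in> N \<rightarrow>\<^sub>M X"
    and "i < C"
  shows "(\<lambda>n. client_iter C p \<beta> \<gamma> E G w0 (\<Phi> n) t i k) \<in> borel_measurable N
    \<and> (\<lambda>n. anchor C p \<beta> \<gamma> E G w0 (\<Phi> n) t i) \<in> borel_measurable N"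
  using samples \<open>i < C\<close>
proof (induction t arbitrary: i k)
  case 0
  have anchor_meas: "(\<lambda>n. anchor C p \<beta> \<gamma> E G w0 (\<Phi> n) 0 i) \<in> borel_measurable N"
    by (simp add: anchor_def)
  have "(\<lambda>n. client_iter C p \<beta> \<gamma> E G w0 (\<Phi> n) 0 i l) \<in> borel_measurable N" if "l \<le> k" for l
    using that
  proof (induction l)
    case (Suc l)
    have sample: "(\<lambda>n. \<Phi> n i 0 l) \<in> N \<rightarrow>\<^sub>M X"
      using "0.prems" Suc.prems by (auto simp: past_def)
    have "(\<lambda>n. pert_iter C p \<beta> \<gamma> E G w0 (\<Phi> n) 0 i l) \<in> borel_measurable N"
      unfolding pert_iter_def using Suc anchor_meas by (intro borel_measurable_add borel_measurable_scaleR) auto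
    from measurable_Pair_comp[OF G[OF "0.prems"(2)] this sample] Suc show ?case
      unfolding client_iter_Suc by (intro borel_measurable_diff borel_measurable_scaleR) auto
  qed (simp add: client_iter_0)
  with anchor_meas show ?case by simp
next
  case (Suc t)
  have "\<And>i' s l. (i', s, l) \<in> past C E t E \<Longrightarrow> (\<lambda>n. \<Phi> n i' s l) \<in> N \<rightarrow>\<^sub>M X"
    using Suc.prems(1) past_mono_Suc_round by blast
  then have prev: "(\<lambda>n. client_iter C p \<beta> \<gamma> E G w0 (\<Phi> n) t j E) \<in> borel_measurable N"
    if "j < C" for j
    using Suc.IH that by blast
  have anchor_meas: "(\<lambda>n. anchor C p \<beta> \<gamma> E G w0 (\<Phi> n) (Suc t) i) \<in> borel_measurable N"
    unfolding anchor_Suc using prev by (intro borel_measurable_sum borel_measurable_scaleR) auto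
  note hyps = Suc.prems
  have "(\<lambda>n. client_iter C p \<beta> \<gamma> E G w0 (\<Phi> n) (Suc t) i l) \<in> borel_measurable N" if "l \<le> k" for l
    using that
  proof (induction l)
    case 0
    then show ?case
      unfolding client_iter_0 using prev by (simp add: borel_measurable_sum borel_measurable_scaleR)
  next
    case (Suc l)
    have sample: "(\<lambda>n. \<Phi> n i (Suc t) l) \<in> N \<rightarrow>\<^sub>M X"
      using hyps Suc.prems by (auto simp: past_def)
    have "(\<lambda>n. pert_iter C p \<beta> \<gamma> E G w0 (\<Phi> n) (Suc t) i l) \<in> borel_measurable N"
      unfolding pert_iter_def using Suc anchor_meas by (intro borel_measurable_add borel_measurable_scaleR) auto
    from measurable_Pair_comp[OF G[OF \<open>i < C\<close>] this sample] Suc show ?case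
      unfolding client_iter_Suc by (intro borel_measurable_diff borel_measurable_scaleR) auto
  qed
  with anchor_meas show ?case by simp
qed

section \<open>Averaging and the final arithmetic\<close>

lemma expectation_pmf_of_set_grid:
  fixes f :: "nat \<Rightarrow> nat \<Rightarrow> real"
  assumes "0 < T" "0 < E"
  shows "measure_pmf.expectation (pmf_of_set ({..<T} \<times> {..<E})) (\<lambda>(t, k). f t k)
       = (\<Sum>t<T. \<Sum>k<E. f t k) / (real T * real E)"
proof -
  have "{..<T} \<times> {..<E} \<noteq> {}" using assms by blast
  then have "measure_pmf.expectation (pmf_of_set ({..<T} \<times> {..<E})) (\<lambda>(t, k). f t k)
      = (\<Sum>x\<in>{..<T} \<times> {..<E}. (\<lambda>(t, k). f t k) x) / card ({..<T} \<times> {..<E})"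
    by (subst integral_pmf_of_set) auto
  then show ?thesis by (simp add: sum.cartesian_product card_cartesian_product)
qed

lemma convergence_rate_arith:
  fixes T E L D S Gb \<beta> \<gamma> Q :: real
  assumes T: "T \<ge> 1" and E: "E \<ge> 1" and L: "L > 0" and \<gamma>: "\<gamma> = 1 / (2 * L * sqrt (T * E))"
    and \<beta>: "0 < \<beta>" "\<beta> < 1"
    and Q: "\<gamma> * Q \<le> 2 * D + T * E * (\<gamma> * L\<^sup>2 * ((3 * \<beta>\<^sup>2 + 3 + 12 * (1 - \<beta>)\<^sup>2) * (\<gamma>\<^sup>2 * (E\<^sup>2 * Gb\<^sup>2)))
                                   + L * \<gamma>\<^sup>2 * S)"
  shows "Q / (T * E) \<le> 1 / sqrt T * (4 * L * D / sqrt E + S / (2 * sqrt E))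
            + E * Gb\<^sup>2 / T * (4 + (1 - \<beta>)\<^sup>2 + 8 * (1 - 1 / \<beta>)\<^sup>2)"
proof -
  define c where "c = 3 * \<beta>\<^sup>2 + 3 + 12 * (1 - \<beta>)\<^sup>2"
  define s where "s = sqrt (T * E)"
  have TE: "T * E \<ge> 1" using T E mult_mono[of 1 T 1 E] by simp
  have pos: "T > 0" "E > 0" "s > 0" "\<gamma> > 0" using T E TE L by (auto simp: s_def \<gamma>)
  have s_sq: "s\<^sup>2 = T * E" using TE by (simp add: s_def)
  have s_split: "sqrt T * sqrt E = s" by (simp add: s_def real_sqrt_mult)
  have \<gamma>_s: "\<gamma> = 1 / (2 * L * s)" by (simp add: \<gamma> s_def)
  have main: "Q / (T * E) \<le> 2 * D / (\<gamma> * (T * E)) + L\<^sup>2 * \<gamma>\<^sup>2 * (c * E\<^sup>2 * Gb\<^sup>2) + L * \<gamma> * S"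
  proof -
    have "Q / (T * E) = (\<gamma> * Q) / (\<gamma> * (T * E))" using pos by simp
    also have "\<dots> \<le> (2 * D + T * E * (\<gamma> * L\<^sup>2 * (c * (\<gamma>\<^sup>2 * (E\<^sup>2 * Gb\<^sup>2))) + L * \<gamma>\<^sup>2 * S)) / (\<gamma> * (T * E))"
      using Q pos by (intro divide_right_mono) (auto simp: c_def)
    also have "\<dots> = 2 * D / (\<gamma> * (T * E)) + L\<^sup>2 * \<gamma>\<^sup>2 * (c * E\<^sup>2 * Gb\<^sup>2) + L * \<gamma> * S"
      using pos by (simp add: field_simps power2_eq_square)
    finally show ?thesis .
  qed
  have descent_term: "2 * D / (\<gamma> * (T * E)) = 1 / sqrt T * (4 * L * D / sqrt E)"
    unfolding \<gamma>_s s_sq[symmetric] s_split[symmetric] using pos L by (simp add: field_simps power2_eq_square)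
  have noise_term: "L * \<gamma> * S = 1 / sqrt T * (S / (2 * sqrt E))"
    unfolding \<gamma>_s s_split[symmetric] using pos L by (simp add: field_simps)
  have drift_term: "L\<^sup>2 * \<gamma>\<^sup>2 * (c * E\<^sup>2 * Gb\<^sup>2) = E * Gb\<^sup>2 / T * (c / 4)"
    unfolding \<gamma>_s using pos L s_sq by (simp add: field_simps power2_eq_square mult.commute)
  have "c / 4 \<le> 4 + (1 - \<beta>)\<^sup>2 + 8 * (1 - 1 / \<beta>)\<^sup>2"
  proof -
    have \<beta>_sq: "\<beta>\<^sup>2 \<le> 1" using \<beta> by (simp add: abs_square_le_1)
    have "(1 - \<beta>)\<^sup>2 \<le> (1 - \<beta>)\<^sup>2 / \<beta>\<^sup>2"
      using \<beta> \<beta>_sq by (simp add: le_divide_eq)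
    also have "\<dots> = (1 - 1 / \<beta>)\<^sup>2"
      using \<beta> by (simp add: field_simps power2_eq_square)
    finally have mono: "(1 - \<beta>)\<^sup>2 \<le> (1 - 1 / \<beta>)\<^sup>2" .
    have linear: "(3 * b + 3 + 12 * a) / 4 \<le> 4 + a + 8 * q" if "a \<le> q" "0 \<le> a" "b \<le> 1" for a b q :: real
    proof -
      have "(3 * b + 3 + 12 * a) / 4 = 3 / 4 * b + 3 / 4 + 3 * a" by simp
      with that show ?thesis by linarith
    qed
    show ?thesis unfolding c_def by (rule linear[OF mono zero_le_power2 \<beta>_sq])
  qed
  then have "E * Gb\<^sup>2 / T * (c / 4) \<le> E * Gb\<^sup>2 / T * (4 + (1 - \<beta>)\<^sup>2 + 8 * (1 - 1 / \<beta>)\<^sup>2)"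
    using pos by (intro mult_left_mono) auto
  with main descent_term noise_term drift_term show ?thesis
    unfolding distrib_left by linarith
qed

section \<open>Convergence analysis\<close>

locale perturbed_fedavg =
  fixes M :: "'a measure" and X :: "'x measure"
    and C E T :: nat and p :: "nat \<Rightarrow> nat \<Rightarrow> real"
    and F :: "nat \<Rightarrow> 'v::euclidean_space \<Rightarrow> real" and gradF :: "nat \<Rightarrow> 'v \<Rightarrow> 'v"
    and G :: "nat \<Rightarrow> 'v \<Rightarrow> 'x \<Rightarrow> 'v" and xi :: "nat \<Rightarrow> nat \<Rightarrow> nat \<Rightarrow> 'a \<Rightarrow> 'x"
    and w0 :: 'v and \<beta> \<gamma> L \<sigma> Gb finf :: real
  assumes M: "prob_space M"
    and p_nonneg: "\<And>i n. i < C \<Longrightarrow> n < C \<Longrightarrow> p i n \<ge> 0"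
    and p_sym: "\<And>i n. i < C \<Longrightarrow> n < C \<Longrightarrow> p i n = p n i"
    and p_sum: "(\<Sum>i<C. \<Sum>n<C. p i n) = 1"
    and p_pos: "\<And>i. i < C \<Longrightarrow> pw p C i > 0"
    and \<beta>: "0 < \<beta>" "\<beta> < 1"
    and E: "E \<ge> 1" and T: "T \<ge> 1"
    and L: "L > 0"
    and \<gamma>: "\<gamma> = 1 / (2 * L * sqrt (real T * real E))"
    and grad: "\<And>i x. i < C \<Longrightarrow> (F i has_derivative (\<lambda>h. gradF i x \<bullet> h)) (at x)"
    and smooth: "\<And>i x y. i < C \<Longrightarrow> norm (gradF i x - gradF i y) \<le> L * norm (x - y)"
    and lower: "\<And>x. (\<Sum>i<C. pw p C i * F i x) \<ge> finf"
    and xi_meas: "\<And>i t k. i < C \<Longrightarrow> t < T \<Longrightarrow> k < E \<Longrightarrow> xi i t k \<in> M \<rightarrow>\<^sub>M X"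
    and xi_indep: "prob_space.indep_vars M (\<lambda>_. X) (\<lambda>(i, t, k). xi i t k)
                     ({..<C} \<times> {..<T} \<times> {..<E})"
    and G_meas: "\<And>i. i < C \<Longrightarrow> (\<lambda>(w, x). G i w x) \<in> borel \<Otimes>\<^sub>M X \<rightarrow>\<^sub>M borel"
    and unbiased: "\<And>i t k w. i < C \<Longrightarrow> t < T \<Longrightarrow> k < E \<Longrightarrow>
        integrable M (\<lambda>\<omega>. G i w (xi i t k \<omega>)) \<and>
        (\<integral>\<omega>. G i w (xi i t k \<omega>) \<partial>M) = gradF i w"
    and variance: "\<And>i t k. i < C \<Longrightarrow> t < T \<Longrightarrow> k < E \<Longrightarrow>
        (let wt = (\<lambda>\<omega>. pert_iter C p \<beta> \<gamma> E G w0 (\<lambda>i t k. xi i t k \<omega>) t i k)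
         in integrable M (\<lambda>\<omega>. (norm (G i (wt \<omega>) (xi i t k \<omega>) - gradF i (wt \<omega>)))\<^sup>2) \<and>
            (\<integral>\<omega>. (norm (G i (wt \<omega>) (xi i t k \<omega>) - gradF i (wt \<omega>)))\<^sup>2 \<partial>M) \<le> \<sigma>\<^sup>2)"
    and gnorm: "\<And>i t k. i < C \<Longrightarrow> t < T \<Longrightarrow> k < E \<Longrightarrow>
        (let wt = (\<lambda>\<omega>. pert_iter C p \<beta> \<gamma> E G w0 (\<lambda>i t k. xi i t k \<omega>) t i k)
         in integrable M (\<lambda>\<omega>. (norm (G i (wt \<omega>) (xi i t k \<omega>)))\<^sup>2) \<and>
            (\<integral>\<omega>. (norm (G i (wt \<omega>) (xi i t k \<omega>)))\<^sup>2 \<partial>M) \<le> Gb\<^sup>2)"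
begin

sublocale prob_space M by (rule M)

definition "P i = pw p C i"
definition "sample \<omega> = (\<lambda>i t k. xi i t k \<omega>)"
definition "W t i k \<omega> = client_iter C p \<beta> \<gamma> E G w0 (sample \<omega>) t i k"
definition "U t i \<omega> = anchor C p \<beta> \<gamma> E G w0 (sample \<omega>) t i"
definition "Wt t i k \<omega> = pert_iter C p \<beta> \<gamma> E G w0 (sample \<omega>) t i k"
definition "Wb t k \<omega> = avg_iter C p \<beta> \<gamma> E G w0 (sample \<omega>) t k"
definition "sgrad i t k \<omega> = G i (Wt t i k \<omega>) (xi i t k \<omega>)"
definition "lgrad i t k \<omega> = gradF i (Wt t i k \<omega>)"
definition "noise i t k \<omega> = sgrad i t k \<omega> - lgrad i t k \<omega>"
definition "Fglob x = (\<Sum>i<C. P i * F i x)"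
definition "grad_Fglob x = (\<Sum>i<C. P i *\<^sub>R gradF i x)"
definition "grad_avg t k \<omega> = grad_Fglob (Wb t k \<omega>)"
definition "mean_lgrad t k \<omega> = (\<Sum>i<C. P i *\<^sub>R lgrad i t k \<omega>)"
definition "mean_sgrad t k \<omega> = (\<Sum>i<C. P i *\<^sub>R sgrad i t k \<omega>)"

lemma P_pos: "i < C \<Longrightarrow> P i > 0" using p_pos by (simp add: P_def)
lemma P_nonneg: "i < C \<Longrightarrow> P i \<ge> 0" using P_pos by fastforce
lemma P_sum: "(\<Sum>i<C. P i) = 1" using p_sum by (simp add: P_def pw_def)
lemma P_row_sum: "P i = (\<Sum>n<C. p i n)" by (simp add: P_def pw_def)
lemma P_col_sum: "i < C \<Longrightarrow> (\<Sum>n<C. p n i) = P i"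
  unfolding P_row_sum by (intro sum.cong) (auto simp: p_sym)

lemma sum_P_scaleR_const: "(\<Sum>i<C. P i *\<^sub>R (v::'v)) = v"
  using scaleR_sum_left[of P "{..<C}" v] P_sum by simp

lemma norm_P_sum_sq_le: "(norm (\<Sum>n<C. P n *\<^sub>R f n))\<^sup>2 \<le> (\<Sum>n<C. P n * (norm (f n))\<^sup>2)"
  using norm_weighted_sum_sq_le[of "{..<C}" P f] P_nonneg P_sum by simp

lemma gamma_pos: "\<gamma> > 0"
  using L T E by (simp add: \<gamma>)

lemma L_gamma_le_1: "L * \<gamma> \<le> 1"
proof -
  have "1 \<le> real T * real E" using T E mult_mono[of 1 "real T" 1 "real E"] by simp
  then have "1 \<le> sqrt (real T * real E)" by simp
  then have "0 < 2 * sqrt (real T * real E)" "1 \<le> 2 * sqrt (real T * real E)" by linarith+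
  then have "1 / (2 * sqrt (real T * real E)) \<le> 1"
    using divide_le_eq_1 by blast
  with L show ?thesis by (simp add: \<gamma>)
qed

lemma gradF_lipschitz: "i < C \<Longrightarrow> L-lipschitz_on UNIV (gradF i)"
  using smooth L by (intro lipschitz_onI) (auto simp: dist_norm)

lemma Fglob_has_derivative: "(Fglob has_derivative (\<lambda>h. grad_Fglob x \<bullet> h)) (at x)"
proof -
  have "(Fglob has_derivative (\<lambda>h. \<Sum>i<C. P i * (gradF i x \<bullet> h))) (at x)"
    unfolding Fglob_def by (intro has_derivative_sum has_derivative_mult_right grad) auto
  then show ?thesis
    by (simp add: grad_Fglob_def inner_sum_left)
qed

lemma grad_Fglob_lipschitz: "L-lipschitz_on UNIV grad_Fglob"
proof (rule lipschitz_onI)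
  fix x y :: 'v
  have "norm (grad_Fglob x - grad_Fglob y) = norm (\<Sum>i<C. P i *\<^sub>R (gradF i x - gradF i y))"
    by (simp add: grad_Fglob_def sum_subtractf scaleR_diff_right)
  also have "\<dots> \<le> (\<Sum>i<C. norm (P i *\<^sub>R (gradF i x - gradF i y)))" by (rule norm_sum)
  also have "\<dots> \<le> (\<Sum>i<C. P i * (L * norm (x - y)))"
    using P_nonneg smooth by (intro sum_mono) (auto intro: mult_left_mono)
  also have "\<dots> = L * norm (x - y)" by (simp add: sum_distrib_right[symmetric] P_sum)
  finally show "dist (grad_Fglob x) (grad_Fglob y) \<le> L * dist x y" by (simp add: dist_norm)
qed (use L in simp)

lemmas Fglob_upper = lipschitz_gradient_quadratic_bounds(1)[OF Fglob_has_derivative grad_Fglob_lipschitz]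

lemma sq_integrable_gradF: "i < C \<Longrightarrow> sq_integrable M f \<Longrightarrow> sq_integrable M (\<lambda>\<omega>. gradF i (f \<omega>))"
  using sq_integrable_lipschitz_comp[OF gradF_lipschitz] by blast

lemma sq_integrable_grad_Fglob: "sq_integrable M f \<Longrightarrow> sq_integrable M (\<lambda>\<omega>. grad_Fglob (f \<omega>))"
  using sq_integrable_lipschitz_comp[OF grad_Fglob_lipschitz] by blast

lemma integrable_Fglob_comp: "sq_integrable M f \<Longrightarrow> integrable M (\<lambda>\<omega>. Fglob (f \<omega>))"
  by (rule integrable_lipschitz_gradient_comp[OF Fglob_has_derivative grad_Fglob_lipschitz])

definition "start t \<omega> = (if t = 0 then w0 else (\<Sum>n<C. P n *\<^sub>R W (t - 1) n E \<omega>))"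

lemma Wt_eq: "Wt t i k \<omega> = \<beta> *\<^sub>R W t i k \<omega> + (1 - \<beta>) *\<^sub>R U t i \<omega>"
  by (simp add: Wt_def W_def U_def pert_iter_def)

lemma W_0: "W t i 0 \<omega> = start t \<omega>"
  by (simp add: W_def start_def client_iter_0 P_def)

lemma W_Suc: "W t i (Suc k) \<omega> = W t i k \<omega> - \<gamma> *\<^sub>R sgrad i t k \<omega>"
  by (simp add: W_def client_iter_Suc sgrad_def Wt_def sample_def)

lemma U_0: "U 0 i \<omega> = w0"
  by (simp add: U_def anchor_def)

lemma U_Suc: "U (Suc t) i \<omega> = (1 / P i) *\<^sub>R (\<Sum>n<C. p i n *\<^sub>R W t n E \<omega>)"
  by (simp add: U_def anchor_Suc W_def P_def)

lemma Wb_eq: "Wb t k \<omega> = (\<Sum>i<C. P i *\<^sub>R W t i k \<omega>)"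
  by (simp add: Wb_def avg_iter_def W_def P_def)

lemma Wb_Suc: "Wb t (Suc k) \<omega> = Wb t k \<omega> - \<gamma> *\<^sub>R mean_sgrad t k \<omega>"
  unfolding Wb_eq W_Suc mean_sgrad_def
  by (simp add: scaleR_diff_right sum_subtractf scaleR_sum_right mult.commute)

lemma Wb_next_round: "Wb (Suc t) 0 \<omega> = Wb t E \<omega>"
  unfolding Wb_eq W_0 by (simp add: sum_P_scaleR_const start_def)

lemma sgrad_second_moment:
  "i < C \<Longrightarrow> t < T \<Longrightarrow> k < E \<Longrightarrow>
   integrable M (\<lambda>\<omega>. (norm (sgrad i t k \<omega>))\<^sup>2) \<and> (\<integral>\<omega>. (norm (sgrad i t k \<omega>))\<^sup>2 \<partial>M) \<le> Gb\<^sup>2"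
  using gnorm[of i t k] by (simp add: Let_def sgrad_def Wt_def sample_def)

lemma noise_second_moment:
  "i < C \<Longrightarrow> t < T \<Longrightarrow> k < E \<Longrightarrow> (\<integral>\<omega>. (norm (noise i t k \<omega>))\<^sup>2 \<partial>M) \<le> \<sigma>\<^sup>2"
  using variance[of i t k] by (simp add: Let_def noise_def lgrad_def sgrad_def Wt_def sample_def)

lemma sq_integrable_sgrad:
  assumes "i < C" "t < T" "k < E" "sq_integrable M (Wt t i k)"
  shows "sq_integrable M (sgrad i t k)"
proof -
  have "sgrad i t k \<in> borel_measurable M"
    unfolding sgrad_def[abs_def]
    by (rule measurable_Pair_comp[OF G_meas]) (use assms xi_meas sq_integrableD(1) in auto)
  with sgrad_second_moment[OF assms(1-3)] show ?thesis by (simp add: sq_integrable_def)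
qed

lemma sq_integrable_W_round:
  assumes t: "t < T" and i: "i < C" and k: "k \<le> E"
    and start: "sq_integrable M (start t)" and anchor: "sq_integrable M (U t i)"
  shows "sq_integrable M (W t i k)"
  using k
proof (induction k)
  case 0
  have "W t i 0 = start t" by (simp add: fun_eq_iff W_0)
  with start show ?case by simp
next
  case (Suc k)
  then have W: "sq_integrable M (W t i k)" by simp
  have "Wt t i k = (\<lambda>\<omega>. \<beta> *\<^sub>R W t i k \<omega> + (1 - \<beta>) *\<^sub>R U t i \<omega>)" by (simp add: fun_eq_iff Wt_eq)
  with W anchor have "sq_integrable M (Wt t i k)" by (auto intro!: sq_integrable_add sq_integrable_scaleR)
  with sq_integrable_sgrad[OF i t] Suc.prems have "sq_integrable M (sgrad i t k)" by simp
  moreover have "W t i (Suc k) = (\<lambda>\<omega>. W t i k \<omega> - \<gamma> *\<^sub>R sgrad i t k \<omega>)" by (simp add: fun_eq_iff W_Suc)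
  ultimately show ?case using W by (auto intro!: sq_integrable_diff sq_integrable_scaleR)
qed

lemma sq_integrable_start_anchor_Suc:
  assumes "\<And>n. n < C \<Longrightarrow> sq_integrable M (W t n E)"
  shows "sq_integrable M (start (Suc t))" "sq_integrable M (U (Suc t) i)"
proof -
  have "start (Suc t) = (\<lambda>\<omega>. \<Sum>n<C. P n *\<^sub>R W t n E \<omega>)"
    and "U (Suc t) i = (\<lambda>\<omega>. (1 / P i) *\<^sub>R (\<Sum>n<C. p i n *\<^sub>R W t n E \<omega>))"
    by (simp_all add: fun_eq_iff start_def U_Suc)
  with assms show "sq_integrable M (start (Suc t))" "sq_integrable M (U (Suc t) i)"
    by (auto intro!: sq_integrable_sum sq_integrable_scaleR)
qed

lemma sq_integrable_W: "t < T \<Longrightarrow> i < C \<Longrightarrow> k \<le> E \<Longrightarrow> sq_integrable M (W t i k)"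
proof (induction t arbitrary: i k)
  case 0
  have "start 0 = (\<lambda>_. w0)" "U 0 i = (\<lambda>_. w0)" by (simp_all add: fun_eq_iff start_def U_0)
  then show ?case by (intro sq_integrable_W_round[OF 0]) simp_all
next
  case (Suc t)
  then have "\<And>n. n < C \<Longrightarrow> sq_integrable M (W t n E)" by simp
  from sq_integrable_start_anchor_Suc[OF this] show ?case
    by (rule sq_integrable_W_round[OF Suc.prems])
qed

lemma sq_integrable_start_anchor:
  assumes "t < T"
  shows "sq_integrable M (start t) \<and> sq_integrable M (U t i)"
proof (cases t)
  case 0
  have "start 0 = (\<lambda>_. w0)" "U 0 i = (\<lambda>_. w0)" by (simp_all add: fun_eq_iff start_def U_0)
  with 0 show ?thesis by simp
next
  case (Suc t')
  with assms sq_integrable_W show ?thesis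
    by (auto intro: sq_integrable_start_anchor_Suc)
qed

lemma sq_integrable_Wb: "t < T \<Longrightarrow> k \<le> E \<Longrightarrow> sq_integrable M (Wb t k)"
  using sq_integrable_W unfolding Wb_eq[abs_def] by (auto intro!: sq_integrable_sum)

lemma sq_integrable_step:
  assumes "t < T" "k < E" "i < C"
  shows "sq_integrable M (Wt t i k)" "sq_integrable M (sgrad i t k)"
    "sq_integrable M (lgrad i t k)" "sq_integrable M (noise i t k)"
proof -
  have "Wt t i k = (\<lambda>\<omega>. \<beta> *\<^sub>R W t i k \<omega> + (1 - \<beta>) *\<^sub>R U t i \<omega>)" by (simp add: fun_eq_iff Wt_eq)
  with assms sq_integrable_W sq_integrable_start_anchor
  show Wt: "sq_integrable M (Wt t i k)" by (auto intro!: sq_integrable_add sq_integrable_scaleR)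
  show sgrad: "sq_integrable M (sgrad i t k)" using sq_integrable_sgrad[OF assms(3,1,2) Wt] .
  show lgrad: "sq_integrable M (lgrad i t k)"
    unfolding lgrad_def[abs_def] using sq_integrable_gradF[OF assms(3) Wt] .
  show "sq_integrable M (noise i t k)"
    unfolding noise_def[abs_def] using sgrad lgrad by (rule sq_integrable_diff)
qed

lemma sq_integrable_averages:
  assumes "t < T" "k < E"
  shows "sq_integrable M (grad_avg t k)" "sq_integrable M (mean_lgrad t k)" "sq_integrable M (mean_sgrad t k)"
  using sq_integrable_grad_Fglob[OF sq_integrable_Wb] sq_integrable_step[OF assms] assms
  unfolding grad_avg_def[abs_def] mean_lgrad_def[abs_def] mean_sgrad_def[abs_def]
  by (auto intro!: sq_integrable_sum sq_integrable_scaleR)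

definition "Idx = {..<C} \<times> {..<T} \<times> {..<E}"
definition "Y = (\<lambda>(i, t, k). xi i t k)"
definition "family z = (\<lambda>i t k. z (i, t, k))"
definition "history J \<omega> = restrict (\<lambda>j. Y j \<omega>) J"

lemma Y_apply [simp]: "Y (i, t, k) \<omega> = xi i t k \<omega>"
  by (simp add: Y_def)

lemma past_subset_Idx: "t < T \<Longrightarrow> k \<le> E \<Longrightarrow> past C E t k \<subseteq> Idx"
  by (auto simp: past_def Idx_def)

lemma iterates_of_history:
  assumes "past C E t k \<subseteq> J" "i < C"
  shows "client_iter C p \<beta> \<gamma> E G w0 (family (history J \<omega>)) t i k = W t i k \<omega>"
    and "anchor C p \<beta> \<gamma> E G w0 (family (history J \<omega>)) t i = U t i \<omega>"
    and "pert_iter C p \<beta> \<gamma> E G w0 (family (history J \<omega>)) t i k = Wt t i k \<omega>"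
proof -
  have "client_iter C p \<beta> \<gamma> E G w0 (family (history J \<omega>)) t i k = client_iter C p \<beta> \<gamma> E G w0 (sample \<omega>) t i k
    \<and> anchor C p \<beta> \<gamma> E G w0 (family (history J \<omega>)) t i = anchor C p \<beta> \<gamma> E G w0 (sample \<omega>) t i"
    by (rule client_iter_anchor_cong[OF _ assms(2)])
       (use assms(1) in \<open>auto simp: family_def history_def sample_def\<close>)
  then show "client_iter C p \<beta> \<gamma> E G w0 (family (history J \<omega>)) t i k = W t i k \<omega>"
    and "anchor C p \<beta> \<gamma> E G w0 (family (history J \<omega>)) t i = U t i \<omega>"
    by (auto simp: W_def U_def)
  then show "pert_iter C p \<beta> \<gamma> E G w0 (family (history J \<omega>)) t i k = Wt t i k \<omega>"
    by (simp add: pert_iter_def Wt_eq)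
qed

lemma iterates_measurable_history:
  assumes "past C E t k \<subseteq> J" "i < C"
  shows "(\<lambda>z. client_iter C p \<beta> \<gamma> E G w0 (family z) t i k) \<in> borel_measurable (PiM J (\<lambda>_. X))"
    and "(\<lambda>z. pert_iter C p \<beta> \<gamma> E G w0 (family z) t i k) \<in> borel_measurable (PiM J (\<lambda>_. X))"
proof -
  have "(\<lambda>z. client_iter C p \<beta> \<gamma> E G w0 (family z) t i k) \<in> borel_measurable (PiM J (\<lambda>_. X))
    \<and> (\<lambda>z. anchor C p \<beta> \<gamma> E G w0 (family z) t i) \<in> borel_measurable (PiM J (\<lambda>_. X))"
    by (rule client_iter_anchor_measurable[OF G_meas _ assms(2)])
       (use assms(1) in \<open>auto simp: family_def intro!: measurable_component_singleton\<close>)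
  then show "(\<lambda>z. client_iter C p \<beta> \<gamma> E G w0 (family z) t i k) \<in> borel_measurable (PiM J (\<lambda>_. X))"
    and "(\<lambda>z. pert_iter C p \<beta> \<gamma> E G w0 (family z) t i k) \<in> borel_measurable (PiM J (\<lambda>_. X))"
    unfolding pert_iter_def by (auto intro!: borel_measurable_add borel_measurable_scaleR)
qed

lemma inner_sgrad_of_history_measurable:
  assumes "past C E t k \<subseteq> J" "i < C" and A: "A \<in> borel_measurable (PiM J (\<lambda>_. X))"
  shows "(\<lambda>(z, x). A z \<bullet> G i (pert_iter C p \<beta> \<gamma> E G w0 (family z) t i k) x)
           \<in> borel_measurable (PiM J (\<lambda>_. X) \<Otimes>\<^sub>M X)"
proof -
  have "(\<lambda>zx. pert_iter C p \<beta> \<gamma> E G w0 (family (fst zx)) t i k) \<in> borel_measurable (PiM J (\<lambda>_. X) \<Otimes>\<^sub>M X)"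
    using measurable_fst''[OF iterates_measurable_history(2)[OF assms(1,2)], of X] by simp
  then have "(\<lambda>zx. G i (pert_iter C p \<beta> \<gamma> E G w0 (family (fst zx)) t i k) (snd zx))
               \<in> borel_measurable (PiM J (\<lambda>_. X) \<Otimes>\<^sub>M X)"
    by (rule measurable_Pair_comp[OF G_meas[OF assms(2)]]) simp
  moreover have "(\<lambda>zx. A (fst zx)) \<in> borel_measurable (PiM J (\<lambda>_. X) \<Otimes>\<^sub>M X)"
    using measurable_fst''[OF A, of X] by simp
  ultimately show ?thesis
    by (simp add: case_prod_beta' borel_measurable_inner)
qed

text \<open>The sample \<open>(i, t, k)\<close> is independent of the samples in \<open>J\<close>, which determine both \<open>a\<close>
  and the perturbed point; integrating it out first turns the stochastic gradient into the true one.\<close>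

lemma integral_inner_sgrad_eq_lgrad:
  assumes t: "t < T" and k: "k < E" and i: "i < C"
    and J: "J \<subseteq> Idx" "past C E t k \<subseteq> J" "(i, t, k) \<notin> J"
    and A: "A \<in> borel_measurable (PiM J (\<lambda>_. X))"
    and a: "\<And>\<omega>. \<omega> \<in> space M \<Longrightarrow> a \<omega> = A (history J \<omega>)" and a_sq: "sq_integrable M a"
  shows "(\<integral>\<omega>. a \<omega> \<bullet> sgrad i t k \<omega> \<partial>M) = (\<integral>\<omega>. a \<omega> \<bullet> lgrad i t k \<omega> \<partial>M)"
proof -
  define h where "h = (\<lambda>(z, x). A z \<bullet> G i (pert_iter C p \<beta> \<gamma> E G w0 (family z) t i k) x)"
  have h_hist: "h (history J \<omega>, xi i t k \<omega>) = a \<omega> \<bullet> sgrad i t k \<omega>" if "\<omega> \<in> space M" for \<omega>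
    using that a iterates_of_history(3)[OF J(2) i] by (simp add: h_def sgrad_def)
  have "integrable M (\<lambda>\<omega>. h (history J \<omega>, xi i t k \<omega>)) \<longleftrightarrow> integrable M (\<lambda>\<omega>. a \<omega> \<bullet> sgrad i t k \<omega>)"
    by (rule Bochner_Integration.integrable_cong) (simp_all add: h_hist)
  with sq_integrable_integrable_inner[OF a_sq sq_integrable_step(2)[OF t k i]]
  have h_int: "integrable M (\<lambda>\<omega>. h (restrict (\<lambda>j. Y j \<omega>) J, Y (i, t, k) \<omega>))"
    by (simp add: history_def)
  have "(\<integral>\<omega>. a \<omega> \<bullet> sgrad i t k \<omega> \<partial>M) = (\<integral>\<omega>. h (history J \<omega>, Y (i, t, k) \<omega>) \<partial>M)"
    by (rule Bochner_Integration.integral_cong) (auto simp: h_hist)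
  also have "\<dots> = (\<integral>\<omega>. (\<integral>\<omega>'. h (history J \<omega>, Y (i, t, k) \<omega>') \<partial>M) \<partial>M)"
    using integral_indep_vars_fresh[OF xi_indep[folded Y_def Idx_def] J(1) _ J(3)
        inner_sgrad_of_history_measurable[OF J(2) i A, folded h_def] h_int] t k i
    unfolding history_def by (simp add: Idx_def)
  also have "\<dots> = (\<integral>\<omega>. a \<omega> \<bullet> lgrad i t k \<omega> \<partial>M)"
  proof (rule Bochner_Integration.integral_cong[OF refl])
    fix \<omega> assume \<omega>: "\<omega> \<in> space M"
    have "(\<integral>\<omega>'. h (history J \<omega>, Y (i, t, k) \<omega>') \<partial>M) = (\<integral>\<omega>'. a \<omega> \<bullet> G i (Wt t i k \<omega>) (xi i t k \<omega>') \<partial>M)"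
      using a[OF \<omega>] iterates_of_history(3)[OF J(2) i] by (simp add: h_def)
    also have "\<dots> = a \<omega> \<bullet> lgrad i t k \<omega>"
      using unbiased[OF i t k] by (simp add: lgrad_def)
    finally show "(\<integral>\<omega>'. h (history J \<omega>, Y (i, t, k) \<omega>') \<partial>M) = a \<omega> \<bullet> lgrad i t k \<omega>" .
  qed
  finally show ?thesis .
qed

lemma integral_inner_noise_eq_0:
  assumes "t < T" "k < E" "i < C" "sq_integrable M a"
    and "(\<integral>\<omega>. a \<omega> \<bullet> sgrad i t k \<omega> \<partial>M) = (\<integral>\<omega>. a \<omega> \<bullet> lgrad i t k \<omega> \<partial>M)"
  shows "(\<integral>\<omega>. a \<omega> \<bullet> noise i t k \<omega> \<partial>M) = 0"
proof -
  have "(\<integral>\<omega>. a \<omega> \<bullet> noise i t k \<omega> \<partial>M)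
      = (\<integral>\<omega>. a \<omega> \<bullet> sgrad i t k \<omega> \<partial>M) - (\<integral>\<omega>. a \<omega> \<bullet> lgrad i t k \<omega> \<partial>M)"
    unfolding noise_def inner_diff_right using sq_integrable_step[OF assms(1-3)] assms(4)
    by (intro Bochner_Integration.integral_diff sq_integrable_integrable_inner)
  with assms(5) show ?thesis by simp
qed

lemma integral_inner_grad_avg_sgrad:
  assumes t: "t < T" and k: "k < E" and i: "i < C"
  shows "(\<integral>\<omega>. grad_avg t k \<omega> \<bullet> sgrad i t k \<omega> \<partial>M) = (\<integral>\<omega>. grad_avg t k \<omega> \<bullet> lgrad i t k \<omega> \<partial>M)"
proof (rule integral_inner_sgrad_eq_lgrad[OF t k i])
  show "past C E t k \<subseteq> Idx" using past_subset_Idx t k by simp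
  show "(i, t, k) \<notin> past C E t k" by (simp add: past_def)
  let ?A = "\<lambda>z. grad_Fglob (\<Sum>j<C. P j *\<^sub>R client_iter C p \<beta> \<gamma> E G w0 (family z) t j k)"
  show "?A \<in> borel_measurable (PiM (past C E t k) (\<lambda>_. X))"
    by (intro borel_measurable_lipschitz_comp[OF grad_Fglob_lipschitz] borel_measurable_sum
        borel_measurable_scaleR borel_measurable_const iterates_measurable_history(1)) auto
  show "grad_avg t k \<omega> = ?A (history (past C E t k) \<omega>)" for \<omega>
    by (simp add: grad_avg_def Wb_eq iterates_of_history(1))
  show "sq_integrable M (grad_avg t k)" using sq_integrable_averages[OF t k] by simp
qed simp

lemma integral_inner_mean_lgrad_noise:
  assumes t: "t < T" and k: "k < E" and i: "i < C"
  shows "(\<integral>\<omega>. mean_lgrad t k \<omega> \<bullet> noise i t k \<omega> \<partial>M) = 0"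
proof (rule integral_inner_noise_eq_0[OF t k i], rule_tac [2] integral_inner_sgrad_eq_lgrad[OF t k i])
  show "sq_integrable M (mean_lgrad t k)" using sq_integrable_averages[OF t k] by simp
  show "past C E t k \<subseteq> Idx" using past_subset_Idx t k by simp
  show "(i, t, k) \<notin> past C E t k" by (simp add: past_def)
  let ?A = "\<lambda>z. (\<Sum>j<C. P j *\<^sub>R gradF j (pert_iter C p \<beta> \<gamma> E G w0 (family z) t j k))"
  show "?A \<in> borel_measurable (PiM (past C E t k) (\<lambda>_. X))"
    by (intro borel_measurable_sum borel_measurable_scaleR borel_measurable_const
        borel_measurable_lipschitz_comp[OF gradF_lipschitz] iterates_measurable_history(2)) auto
  show "mean_lgrad t k \<omega> = ?A (history (past C E t k) \<omega>)" for \<omega>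
    by (simp add: mean_lgrad_def lgrad_def iterates_of_history(3))
qed (use sq_integrable_averages[OF t k] in simp_all)

text \<open>For \<open>j \<noteq> i\<close> the sample \<open>(j, t, k)\<close> is drawn in the same local step as \<open>(i, t, k)\<close> but
  independently of it, so it may be added to the conditioning set.\<close>

lemma integral_inner_noise_noise:
  assumes t: "t < T" and k: "k < E" and i: "i < C" and j: "j < C" and ij: "j \<noteq> i"
  shows "(\<integral>\<omega>. noise j t k \<omega> \<bullet> noise i t k \<omega> \<partial>M) = 0"
proof (rule integral_inner_noise_eq_0[OF t k i], rule_tac [2] integral_inner_sgrad_eq_lgrad[OF t k i])
  let ?J = "insert (j, t, k) (past C E t k)"
  show "sq_integrable M (noise j t k)" using sq_integrable_step[OF t k j] by simp
  show "?J \<subseteq> Idx" using past_subset_Idx t k j by (auto simp: Idx_def)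
  show "(i, t, k) \<notin> ?J" using ij by (simp add: past_def)
  let ?Wt = "\<lambda>z. pert_iter C p \<beta> \<gamma> E G w0 (family z) t j k"
  let ?A = "\<lambda>z. G j (?Wt z) (z (j, t, k)) - gradF j (?Wt z)"
  have Wt_meas: "?Wt \<in> borel_measurable (PiM ?J (\<lambda>_. X))"
    by (rule iterates_measurable_history(2)) (auto simp: j)
  have "(\<lambda>z. z (j, t, k)) \<in> PiM ?J (\<lambda>_. X) \<rightarrow>\<^sub>M X"
    by (rule measurable_component_singleton) simp
  then show "?A \<in> borel_measurable (PiM ?J (\<lambda>_. X))"
    by (intro borel_measurable_diff measurable_Pair_comp[OF G_meas[OF j] Wt_meas]
        borel_measurable_lipschitz_comp[OF gradF_lipschitz[OF j] Wt_meas])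
  show "noise j t k \<omega> = ?A (history ?J \<omega>)" for \<omega>
  proof -
    have "history ?J \<omega> (j, t, k) = xi j t k \<omega>" by (simp add: history_def)
    moreover have "?Wt (history ?J \<omega>) = Wt t j k \<omega>"
      by (rule iterates_of_history(3)) (auto simp: j)
    ultimately show ?thesis by (simp add: noise_def sgrad_def lgrad_def)
  qed
qed (use sq_integrable_step[OF t k j] in auto)

lemma integral_inner_grad_avg_mean_sgrad:
  assumes t: "t < T" and k: "k < E"
  shows "(\<integral>\<omega>. grad_avg t k \<omega> \<bullet> mean_sgrad t k \<omega> \<partial>M) = (\<integral>\<omega>. grad_avg t k \<omega> \<bullet> mean_lgrad t k \<omega> \<partial>M)"
proof -
  have int: "integrable M (\<lambda>\<omega>. grad_avg t k \<omega> \<bullet> sgrad i t k \<omega>)"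
    "integrable M (\<lambda>\<omega>. grad_avg t k \<omega> \<bullet> lgrad i t k \<omega>)" if "i < C" for i
    using sq_integrable_averages[OF t k] sq_integrable_step[OF t k that]
    by (auto intro: sq_integrable_integrable_inner)
  have "(\<integral>\<omega>. grad_avg t k \<omega> \<bullet> mean_sgrad t k \<omega> \<partial>M) = (\<Sum>i<C. P i * (\<integral>\<omega>. grad_avg t k \<omega> \<bullet> sgrad i t k \<omega> \<partial>M))"
    using int by (simp add: mean_sgrad_def inner_sum_right Bochner_Integration.integral_sum)
  also have "\<dots> = (\<Sum>i<C. P i * (\<integral>\<omega>. grad_avg t k \<omega> \<bullet> lgrad i t k \<omega> \<partial>M))"
    using integral_inner_grad_avg_sgrad[OF t k] by simp
  also have "\<dots> = (\<integral>\<omega>. grad_avg t k \<omega> \<bullet> mean_lgrad t k \<omega> \<partial>M)"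
    using int by (simp add: mean_lgrad_def inner_sum_right Bochner_Integration.integral_sum)
  finally show ?thesis .
qed

lemma integral_norm_mean_sgrad_sq_le:
  assumes t: "t < T" and k: "k < E"
  shows "(\<integral>\<omega>. (norm (mean_sgrad t k \<omega>))\<^sup>2 \<partial>M)
       \<le> (\<integral>\<omega>. (norm (mean_lgrad t k \<omega>))\<^sup>2 \<partial>M) + (\<Sum>i<C. (P i)\<^sup>2) * \<sigma>\<^sup>2"
proof -
  have "mean_sgrad t k \<omega> = mean_lgrad t k \<omega> + (\<Sum>i<C. P i *\<^sub>R noise i t k \<omega>)" for \<omega>
    by (simp add: mean_sgrad_def mean_lgrad_def noise_def scaleR_diff_right sum_subtractf)
  then have "(\<integral>\<omega>. (norm (mean_sgrad t k \<omega>))\<^sup>2 \<partial>M)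
      = (\<integral>\<omega>. (norm (mean_lgrad t k \<omega> + (\<Sum>i<C. P i *\<^sub>R noise i t k \<omega>)))\<^sup>2 \<partial>M)"
    by simp
  also have "\<dots> = (\<integral>\<omega>. (norm (mean_lgrad t k \<omega>))\<^sup>2 \<partial>M)
      + (\<Sum>i<C. (P i)\<^sup>2 * (\<integral>\<omega>. (norm (noise i t k \<omega>))\<^sup>2 \<partial>M))"
  proof (rule integral_norm_sq_add_orthogonal_sum)
    show "sq_integrable M (mean_lgrad t k)" using sq_integrable_averages[OF t k] by simp
    show "sq_integrable M (noise i t k)" if "i \<in> {..<C}" for i
      using sq_integrable_step[OF t k] that by simp
    show "(\<integral>\<omega>. mean_lgrad t k \<omega> \<bullet> noise i t k \<omega> \<partial>M) = 0" if "i \<in> {..<C}" for i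
      using integral_inner_mean_lgrad_noise[OF t k] that by simp
    show "(\<integral>\<omega>. noise i t k \<omega> \<bullet> noise j t k \<omega> \<partial>M) = 0"
      if "i \<in> {..<C}" "j \<in> {..<C}" "i \<noteq> j" for i j
      using integral_inner_noise_noise[OF t k] that by simp
  qed simp
  also have "\<dots> \<le> (\<integral>\<omega>. (norm (mean_lgrad t k \<omega>))\<^sup>2 \<partial>M) + (\<Sum>i<C. (P i)\<^sup>2 * \<sigma>\<^sup>2)"
    using noise_second_moment t k by (intro add_left_mono sum_mono mult_left_mono) auto
  finally show ?thesis by (simp only: sum_distrib_right)
qed

definition "drift i t k \<omega> = \<gamma> *\<^sub>R (\<Sum>s<k. sgrad i t s \<omega>)"

lemma W_drift: "W t i k \<omega> = start t \<omega> - drift i t k \<omega>"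
  by (induction k) (simp_all add: W_0 W_Suc drift_def scaleR_add_right algebra_simps)

lemma Wb_drift: "Wb t k \<omega> = start t \<omega> - (\<Sum>i<C. P i *\<^sub>R drift i t k \<omega>)"
  by (simp add: Wb_eq W_drift scaleR_diff_right sum_subtractf sum_P_scaleR_const)

lemma anchor_minus_start_Suc:
  assumes i: "i < C"
  shows "U (Suc t) i \<omega> - start (Suc t) \<omega>
       = (\<Sum>n<C. P n *\<^sub>R drift n t E \<omega>) - (\<Sum>n<C. (p i n / P i) *\<^sub>R drift n t E \<omega>)"
proof -
  have "start (Suc t) \<omega> = start t \<omega> - (\<Sum>n<C. P n *\<^sub>R drift n t E \<omega>)"
    by (simp add: start_def W_drift scaleR_diff_right sum_subtractf sum_P_scaleR_const)
  moreover have "U (Suc t) i \<omega> = start t \<omega> - (\<Sum>n<C. (p i n / P i) *\<^sub>R drift n t E \<omega>)"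
  proof -
    have "U (Suc t) i \<omega> = (1 / P i) *\<^sub>R ((\<Sum>n<C. p i n) *\<^sub>R start t \<omega> - (\<Sum>n<C. p i n *\<^sub>R drift n t E \<omega>))"
      by (simp add: U_Suc W_drift scaleR_diff_right sum_subtractf scaleR_sum_left)
    also have "\<dots> = start t \<omega> - (\<Sum>n<C. (p i n / P i) *\<^sub>R drift n t E \<omega>)"
      using P_pos[OF i] by (simp add: P_row_sum[symmetric] scaleR_diff_right scaleR_sum_right)
    finally show ?thesis .
  qed
  ultimately show ?thesis by simp
qed

lemma norm_row_sum_sq_le:
  assumes i: "i < C"
  shows "(norm (\<Sum>n<C. (p i n / P i) *\<^sub>R f n))\<^sup>2 \<le> (\<Sum>n<C. (p i n / P i) * (norm (f n))\<^sup>2)"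
proof -
  have "(\<Sum>n<C. p i n / P i) = 1"
    using P_pos[OF i] by (simp add: sum_divide_distrib[symmetric] P_row_sum[symmetric])
  with norm_weighted_sum_sq_le[of "{..<C}" "\<lambda>n. p i n / P i" f] p_nonneg i P_pos[OF i]
  show ?thesis by simp
qed

text \<open>The weights \<open>p i n / P i\<close>, averaged over \<open>i\<close> with weights \<open>P i\<close>, give back \<open>P n\<close> by
  symmetry of \<open>p\<close>.\<close>

lemma anchor_mismatch_le:
  "(\<Sum>i<C. P i * (norm ((\<Sum>n<C. P n *\<^sub>R f n) - (\<Sum>n<C. (p i n / P i) *\<^sub>R f n)))\<^sup>2)
    \<le> 4 * (\<Sum>n<C. P n * (norm (f n))\<^sup>2)"
proof -
  let ?Q = "\<Sum>n<C. P n * (norm (f n))\<^sup>2"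
  let ?R = "\<lambda>i. \<Sum>n<C. (p i n / P i) * (norm (f n))\<^sup>2"
  have "(\<Sum>i<C. P i * (norm ((\<Sum>n<C. P n *\<^sub>R f n) - (\<Sum>n<C. (p i n / P i) *\<^sub>R f n)))\<^sup>2)
     \<le> (\<Sum>i<C. P i * (2 * ?Q + 2 * ?R i))"
  proof (rule sum_mono)
    fix i assume i: "i \<in> {..<C}"
    have "(norm ((\<Sum>n<C. P n *\<^sub>R f n) - (\<Sum>n<C. (p i n / P i) *\<^sub>R f n)))\<^sup>2
        \<le> 2 * (norm (\<Sum>n<C. P n *\<^sub>R f n))\<^sup>2 + 2 * (norm (\<Sum>n<C. (p i n / P i) *\<^sub>R f n))\<^sup>2"
      by (rule norm_diff_sq_le)
    also have "\<dots> \<le> 2 * ?Q + 2 * ?R i"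
      using norm_P_sum_sq_le[of f] norm_row_sum_sq_le[of i f] i by simp
    finally show "P i * (norm ((\<Sum>n<C. P n *\<^sub>R f n) - (\<Sum>n<C. (p i n / P i) *\<^sub>R f n)))\<^sup>2
        \<le> P i * (2 * ?Q + 2 * ?R i)"
      using P_nonneg i by (intro mult_left_mono) auto
  qed
  also have "\<dots> = (\<Sum>i<C. 2 * ?Q * P i + 2 * (P i * ?R i))"
    by (intro sum.cong) (simp_all add: algebra_simps)
  also have "\<dots> = 2 * ?Q * (\<Sum>i<C. P i) + 2 * (\<Sum>i<C. P i * ?R i)"
    by (simp add: sum.distrib sum_distrib_left)
  also have "(\<Sum>i<C. P i * ?R i) = (\<Sum>i<C. \<Sum>n<C. p i n * (norm (f n))\<^sup>2)"
    using P_pos by (intro sum.cong refl) (simp add: sum_distrib_left less_imp_neq[symmetric])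
  also have "\<dots> = ?Q"
    by (subst sum.swap) (simp add: sum_distrib_right[symmetric] P_col_sum)
  finally show ?thesis by (simp add: P_sum)
qed

definition "dispersion t k \<omega> = (\<Sum>i<C. P i * (norm (Wb t k \<omega> - Wt t i k \<omega>))\<^sup>2)"

definition "drift_energy t k \<omega> = (\<Sum>i<C. P i * (norm (drift i t k \<omega>))\<^sup>2)"

lemma anchor_gap_le:
  "(\<Sum>i<C. P i * (norm (U t i \<omega> - start t \<omega>))\<^sup>2)
     \<le> 4 * (if t = 0 then 0 else drift_energy (t - 1) E \<omega>)"
proof (cases t)
  case 0
  then show ?thesis by (simp add: U_0 start_def)
next
  case (Suc t')
  have "(\<Sum>i<C. P i * (norm (U t i \<omega> - start t \<omega>))\<^sup>2)
      = (\<Sum>i<C. P i * (norm ((\<Sum>n<C. P n *\<^sub>R drift n t' E \<omega>) - (\<Sum>n<C. (p i n / P i) *\<^sub>R drift n t' E \<omega>)))\<^sup>2)"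
    unfolding Suc by (intro sum.cong refl) (simp add: anchor_minus_start_Suc)
  also have "\<dots> \<le> 4 * drift_energy t' E \<omega>"
    unfolding drift_energy_def by (rule anchor_mismatch_le)
  finally show ?thesis using Suc by simp
qed

lemma dispersion_le:
  "dispersion t k \<omega> \<le> 3 * (\<beta>\<^sup>2 + 1) * drift_energy t k \<omega>
     + 3 * (1 - \<beta>)\<^sup>2 * (\<Sum>i<C. P i * (norm (U t i \<omega> - start t \<omega>))\<^sup>2)"
proof -
  let ?d = "\<lambda>i. drift i t k \<omega>" and ?a = "\<lambda>i. U t i \<omega> - start t \<omega>"
  have "(norm (Wb t k \<omega> - Wt t i k \<omega>))\<^sup>2
      \<le> 3 * (\<beta>\<^sup>2 * (norm (?d i))\<^sup>2 + (1 - \<beta>)\<^sup>2 * (norm (?a i))\<^sup>2 + (norm (\<Sum>j<C. P j *\<^sub>R ?d j))\<^sup>2)" for i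
  proof -
    have "Wb t k \<omega> - Wt t i k \<omega> = \<beta> *\<^sub>R ?d i + - ((1 - \<beta>) *\<^sub>R ?a i) + - (\<Sum>j<C. P j *\<^sub>R ?d j)"
      by (simp add: Wb_drift Wt_eq W_drift algebra_simps)
    then show ?thesis
      using norm_add3_sq_le[of "\<beta> *\<^sub>R ?d i" "- ((1 - \<beta>) *\<^sub>R ?a i)" "- (\<Sum>j<C. P j *\<^sub>R ?d j)"]
      by (simp add: power_mult_distrib)
  qed
  then have "dispersion t k \<omega>
      \<le> (\<Sum>i<C. P i * (3 * (\<beta>\<^sup>2 * (norm (?d i))\<^sup>2 + (1 - \<beta>)\<^sup>2 * (norm (?a i))\<^sup>2
                          + (norm (\<Sum>j<C. P j *\<^sub>R ?d j))\<^sup>2)))"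
    unfolding dispersion_def using P_nonneg by (intro sum_mono mult_left_mono) auto
  also have "\<dots> = 3 * \<beta>\<^sup>2 * drift_energy t k \<omega> + 3 * (1 - \<beta>)\<^sup>2 * (\<Sum>i<C. P i * (norm (?a i))\<^sup>2)
      + 3 * (norm (\<Sum>j<C. P j *\<^sub>R ?d j))\<^sup>2 * (\<Sum>i<C. P i)"
    by (simp add: drift_energy_def sum.distrib sum_distrib_left sum_distrib_right algebra_simps)
  also have "\<dots> \<le> 3 * \<beta>\<^sup>2 * drift_energy t k \<omega> + 3 * (1 - \<beta>)\<^sup>2 * (\<Sum>i<C. P i * (norm (?a i))\<^sup>2)
      + 3 * drift_energy t k \<omega>"
    using norm_P_sum_sq_le[of ?d] unfolding P_sum drift_energy_def by simp
  finally show ?thesis by (simp add: algebra_simps)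
qed

lemma drift_second_moment:
  assumes t: "t < T" and k: "k \<le> E" and i: "i < C"
  shows "integrable M (\<lambda>\<omega>. (norm (drift i t k \<omega>))\<^sup>2)"
    and "(\<integral>\<omega>. (norm (drift i t k \<omega>))\<^sup>2 \<partial>M) \<le> \<gamma>\<^sup>2 * ((real E)\<^sup>2 * Gb\<^sup>2)"
proof -
  have sgrad: "\<And>s. s < k \<Longrightarrow> sq_integrable M (sgrad i t s)"
    using sq_integrable_step(2)[OF t _ i] k by simp
  then have "sq_integrable M (drift i t k)"
    unfolding drift_def[abs_def] by (intro sq_integrable_scaleR sq_integrable_sum) auto
  then show int: "integrable M (\<lambda>\<omega>. (norm (drift i t k \<omega>))\<^sup>2)" by (rule sq_integrableD)
  have sgrad_int: "\<And>s. s < k \<Longrightarrow> integrable M (\<lambda>\<omega>. (norm (sgrad i t s \<omega>))\<^sup>2)"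
    using sgrad sq_integrableD(2) by blast
  have pointwise: "(norm (drift i t k \<omega>))\<^sup>2 \<le> \<gamma>\<^sup>2 * (real k * (\<Sum>s<k. (norm (sgrad i t s \<omega>))\<^sup>2))" for \<omega>
    using norm_weighted_sum_sq_le[of "{..<k}" "\<lambda>_. 1" "\<lambda>s. sgrad i t s \<omega>"]
    by (simp add: drift_def power_mult_distrib mult_left_mono)
  have "(\<integral>\<omega>. (norm (drift i t k \<omega>))\<^sup>2 \<partial>M) \<le> (\<integral>\<omega>. \<gamma>\<^sup>2 * (real k * (\<Sum>s<k. (norm (sgrad i t s \<omega>))\<^sup>2)) \<partial>M)"
    using int sgrad_int pointwise by (intro integral_mono) auto
  also have "\<dots> = \<gamma>\<^sup>2 * (real k * (\<Sum>s<k. (\<integral>\<omega>. (norm (sgrad i t s \<omega>))\<^sup>2 \<partial>M)))"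
    using sgrad_int by (simp add: Bochner_Integration.integral_sum)
  also have "\<dots> \<le> \<gamma>\<^sup>2 * (real k * (\<Sum>s<k. Gb\<^sup>2))"
    using sgrad_second_moment[OF i t] k by (intro mult_left_mono sum_mono) auto
  also have "\<dots> = \<gamma>\<^sup>2 * ((real k)\<^sup>2 * Gb\<^sup>2)" by (simp add: power2_eq_square)
  also have "\<dots> \<le> \<gamma>\<^sup>2 * ((real E)\<^sup>2 * Gb\<^sup>2)"
    using k by (intro mult_left_mono mult_right_mono power_mono) auto
  finally show "(\<integral>\<omega>. (norm (drift i t k \<omega>))\<^sup>2 \<partial>M) \<le> \<gamma>\<^sup>2 * ((real E)\<^sup>2 * Gb\<^sup>2)" .
qed

lemma drift_energy_second_moment:
  assumes t: "t < T" and k: "k \<le> E"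
  shows "integrable M (drift_energy t k)"
    and "(\<integral>\<omega>. drift_energy t k \<omega> \<partial>M) \<le> \<gamma>\<^sup>2 * ((real E)\<^sup>2 * Gb\<^sup>2)"
proof -
  note drift = drift_second_moment[OF t k]
  show "integrable M (drift_energy t k)"
    unfolding drift_energy_def[abs_def] using drift by auto
  have "(\<integral>\<omega>. drift_energy t k \<omega> \<partial>M) = (\<Sum>i<C. P i * (\<integral>\<omega>. (norm (drift i t k \<omega>))\<^sup>2 \<partial>M))"
    unfolding drift_energy_def using drift by (simp add: Bochner_Integration.integral_sum)
  also have "\<dots> \<le> (\<Sum>i<C. P i * (\<gamma>\<^sup>2 * ((real E)\<^sup>2 * Gb\<^sup>2)))"
    using drift P_nonneg by (intro sum_mono mult_left_mono) auto
  also have "\<dots> = \<gamma>\<^sup>2 * ((real E)\<^sup>2 * Gb\<^sup>2)"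
    by (simp add: sum_distrib_right[symmetric] P_sum)
  finally show "(\<integral>\<omega>. drift_energy t k \<omega> \<partial>M) \<le> \<gamma>\<^sup>2 * ((real E)\<^sup>2 * Gb\<^sup>2)" .
qed

lemma integral_dispersion_le:
  assumes t: "t < T" and k: "k < E"
  shows "integrable M (dispersion t k)"
    and "(\<integral>\<omega>. dispersion t k \<omega> \<partial>M) \<le> (3 * \<beta>\<^sup>2 + 3 + 12 * (1 - \<beta>)\<^sup>2) * (\<gamma>\<^sup>2 * ((real E)\<^sup>2 * Gb\<^sup>2))"
proof -
  define K where "K = \<gamma>\<^sup>2 * ((real E)\<^sup>2 * Gb\<^sup>2)"
  define prev where "prev \<omega> = (if t = 0 then 0 else drift_energy (t - 1) E \<omega>)" for \<omega>
  have "\<And>i. i < C \<Longrightarrow> sq_integrable M (\<lambda>\<omega>. Wb t k \<omega> - Wt t i k \<omega>)"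
    using sq_integrable_Wb[OF t] sq_integrable_step[OF t k] k by auto
  then show int: "integrable M (dispersion t k)"
    unfolding dispersion_def[abs_def]
    by (auto intro!: Bochner_Integration.integrable_sum integrable_mult_right sq_integrableD(2))
  have cur: "integrable M (drift_energy t k)" "(\<integral>\<omega>. drift_energy t k \<omega> \<partial>M) \<le> K"
    using drift_energy_second_moment[OF t] k unfolding K_def by simp_all
  have "integrable M prev \<and> (\<integral>\<omega>. prev \<omega> \<partial>M) \<le> K"
  proof (cases "t = 0")
    case True
    then show ?thesis by (simp add: prev_def[abs_def] K_def)
  next
    case False
    with t drift_energy_second_moment[of "t - 1" E] show ?thesis
      by (simp add: prev_def[abs_def] K_def)
  qed
  then have prev: "integrable M prev" "(\<integral>\<omega>. prev \<omega> \<partial>M) \<le> K" by simp_all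
  have "dispersion t k \<omega> \<le> 3 * (\<beta>\<^sup>2 + 1) * drift_energy t k \<omega> + 12 * (1 - \<beta>)\<^sup>2 * prev \<omega>" for \<omega>
    using dispersion_le[of t k \<omega>] anchor_gap_le[of t \<omega>]
      mult_left_mono[of _ _ "3 * (1 - \<beta>)\<^sup>2"] unfolding prev_def by fastforce
  then have "(\<integral>\<omega>. dispersion t k \<omega> \<partial>M)
      \<le> (\<integral>\<omega>. 3 * (\<beta>\<^sup>2 + 1) * drift_energy t k \<omega> + 12 * (1 - \<beta>)\<^sup>2 * prev \<omega> \<partial>M)"
    using int cur prev by (intro integral_mono) auto
  also have "\<dots> = 3 * (\<beta>\<^sup>2 + 1) * (\<integral>\<omega>. drift_energy t k \<omega> \<partial>M) + 12 * (1 - \<beta>)\<^sup>2 * (\<integral>\<omega>. prev \<omega> \<partial>M)"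
    using cur prev by simp
  also have "\<dots> \<le> 3 * (\<beta>\<^sup>2 + 1) * K + 12 * (1 - \<beta>)\<^sup>2 * K"
    using cur prev by (intro add_mono mult_left_mono) auto
  finally show "(\<integral>\<omega>. dispersion t k \<omega> \<partial>M) \<le> (3 * \<beta>\<^sup>2 + 3 + 12 * (1 - \<beta>)\<^sup>2) * K"
    by (simp add: algebra_simps)
qed

lemma norm_grad_avg_minus_mean_lgrad_sq_le:
  "(norm (grad_avg t k \<omega> - mean_lgrad t k \<omega>))\<^sup>2 \<le> L\<^sup>2 * dispersion t k \<omega>"
proof -
  have "grad_avg t k \<omega> - mean_lgrad t k \<omega> = (\<Sum>i<C. P i *\<^sub>R (gradF i (Wb t k \<omega>) - gradF i (Wt t i k \<omega>)))"
    by (simp add: grad_avg_def mean_lgrad_def grad_Fglob_def lgrad_def scaleR_diff_right sum_subtractf)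
  then have "(norm (grad_avg t k \<omega> - mean_lgrad t k \<omega>))\<^sup>2
      \<le> (\<Sum>i<C. P i * (norm (gradF i (Wb t k \<omega>) - gradF i (Wt t i k \<omega>)))\<^sup>2)"
    using norm_P_sum_sq_le by simp
  also have "\<dots> \<le> (\<Sum>i<C. P i * (L * norm (Wb t k \<omega> - Wt t i k \<omega>))\<^sup>2)"
    using P_nonneg smooth by (intro sum_mono mult_left_mono power_mono) auto
  also have "\<dots> = L\<^sup>2 * dispersion t k \<omega>"
    by (simp add: dispersion_def sum_distrib_left power_mult_distrib mult.left_commute)
  finally show ?thesis .
qed

lemma integral_Fglob_Wb_Suc_le:
  assumes t: "t < T" and k: "k < E"
  shows "(\<integral>\<omega>. Fglob (Wb t (Suc k) \<omega>) \<partial>M) \<le> (\<integral>\<omega>. Fglob (Wb t k \<omega>) \<partial>M)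
     - \<gamma> * (\<integral>\<omega>. grad_avg t k \<omega> \<bullet> mean_sgrad t k \<omega> \<partial>M) + L * \<gamma>\<^sup>2 / 2 * (\<integral>\<omega>. (norm (mean_sgrad t k \<omega>))\<^sup>2 \<partial>M)"
proof -
  have int: "integrable M (\<lambda>\<omega>. Fglob (Wb t k \<omega>))" "integrable M (\<lambda>\<omega>. Fglob (Wb t (Suc k) \<omega>))"
    "integrable M (\<lambda>\<omega>. grad_avg t k \<omega> \<bullet> mean_sgrad t k \<omega>)" "integrable M (\<lambda>\<omega>. (norm (mean_sgrad t k \<omega>))\<^sup>2)"
    using integrable_Fglob_comp sq_integrable_Wb[OF t] k sq_integrable_averages[OF t k]
    by (auto intro: sq_integrable_integrable_inner sq_integrableD(2))
  have "Fglob (Wb t (Suc k) \<omega>)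
      \<le> Fglob (Wb t k \<omega>) - \<gamma> * (grad_avg t k \<omega> \<bullet> mean_sgrad t k \<omega>) + L * \<gamma>\<^sup>2 / 2 * (norm (mean_sgrad t k \<omega>))\<^sup>2" for \<omega>
    using Fglob_upper[of "Wb t (Suc k) \<omega>" "Wb t k \<omega>"]
    by (simp add: Wb_Suc grad_avg_def power_mult_distrib)
  then have "(\<integral>\<omega>. Fglob (Wb t (Suc k) \<omega>) \<partial>M) \<le> (\<integral>\<omega>. Fglob (Wb t k \<omega>)
      - \<gamma> * (grad_avg t k \<omega> \<bullet> mean_sgrad t k \<omega>) + L * \<gamma>\<^sup>2 / 2 * (norm (mean_sgrad t k \<omega>))\<^sup>2 \<partial>M)"
    using int by (intro integral_mono) auto
  with int show ?thesis by simp
qed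

lemma integral_inner_grad_avg_mean_lgrad_ge:
  assumes t: "t < T" and k: "k < E"
  shows "2 * (\<integral>\<omega>. grad_avg t k \<omega> \<bullet> mean_lgrad t k \<omega> \<partial>M)
     \<ge> (\<integral>\<omega>. (norm (grad_avg t k \<omega>))\<^sup>2 \<partial>M) + (\<integral>\<omega>. (norm (mean_lgrad t k \<omega>))\<^sup>2 \<partial>M)
       - L\<^sup>2 * (\<integral>\<omega>. dispersion t k \<omega> \<partial>M)"
proof -
  have int: "integrable M (\<lambda>\<omega>. grad_avg t k \<omega> \<bullet> mean_lgrad t k \<omega>)"
    "integrable M (\<lambda>\<omega>. (norm (grad_avg t k \<omega>))\<^sup>2)" "integrable M (\<lambda>\<omega>. (norm (mean_lgrad t k \<omega>))\<^sup>2)"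
    using sq_integrable_averages[OF t k] by (auto intro: sq_integrable_integrable_inner sq_integrableD(2))
  have "(norm (grad_avg t k \<omega>))\<^sup>2 + (norm (mean_lgrad t k \<omega>))\<^sup>2 - L\<^sup>2 * dispersion t k \<omega>
      \<le> 2 * (grad_avg t k \<omega> \<bullet> mean_lgrad t k \<omega>)" for \<omega>
    using norm_grad_avg_minus_mean_lgrad_sq_le[of t k \<omega>]
    by (simp add: power2_norm_eq_inner inner_diff_left inner_diff_right inner_commute)
  then have "(\<integral>\<omega>. (norm (grad_avg t k \<omega>))\<^sup>2 + (norm (mean_lgrad t k \<omega>))\<^sup>2 - L\<^sup>2 * dispersion t k \<omega> \<partial>M)
      \<le> (\<integral>\<omega>. 2 * (grad_avg t k \<omega> \<bullet> mean_lgrad t k \<omega>) \<partial>M)"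
    using int integral_dispersion_le(1)[OF t k] by (intro integral_mono) auto
  with int integral_dispersion_le(1)[OF t k] show ?thesis by simp
qed

lemma one_step_descent:
  assumes t: "t < T" and k: "k < E"
  shows "\<gamma> * (\<integral>\<omega>. (norm (grad_avg t k \<omega>))\<^sup>2 \<partial>M)
    \<le> 2 * ((\<integral>\<omega>. Fglob (Wb t k \<omega>) \<partial>M) - (\<integral>\<omega>. Fglob (Wb t (Suc k) \<omega>) \<partial>M))
      + \<gamma> * L\<^sup>2 * (\<integral>\<omega>. dispersion t k \<omega> \<partial>M) + L * \<gamma>\<^sup>2 * ((\<Sum>i<C. (P i)\<^sup>2) * \<sigma>\<^sup>2)"
    (is "\<gamma> * ?A \<le> 2 * (?F0 - ?F1) + \<gamma> * L\<^sup>2 * ?D + L * \<gamma>\<^sup>2 * ?S")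
proof -
  define X where "X = (\<integral>\<omega>. grad_avg t k \<omega> \<bullet> mean_lgrad t k \<omega> \<partial>M)"
  define B where "B = (\<integral>\<omega>. (norm (mean_lgrad t k \<omega>))\<^sup>2 \<partial>M)"
  define V where "V = (\<integral>\<omega>. (norm (mean_sgrad t k \<omega>))\<^sup>2 \<partial>M)"
  have descent: "?F1 \<le> ?F0 - \<gamma> * X + L * \<gamma>\<^sup>2 / 2 * V"
    using integral_Fglob_Wb_Suc_le[OF t k] integral_inner_grad_avg_mean_sgrad[OF t k]
    unfolding X_def V_def by simp
  have inner: "\<gamma> * (?A + B - L\<^sup>2 * ?D) \<le> \<gamma> * (2 * X)"
    using integral_inner_grad_avg_mean_lgrad_ge[OF t k] gamma_pos
    unfolding X_def B_def by (intro mult_left_mono) auto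
  have variance: "L * \<gamma>\<^sup>2 * V \<le> L * \<gamma>\<^sup>2 * (B + ?S)"
    unfolding B_def V_def using integral_norm_mean_sgrad_sq_le[OF t k] L
    by (intro mult_left_mono) auto
  have "L * \<gamma>\<^sup>2 * B \<le> \<gamma> * B"
  proof -
    have "0 \<le> \<gamma> * B" using gamma_pos by (simp add: B_def)
    from mult_right_mono[OF L_gamma_le_1 this] show ?thesis by (simp add: power2_eq_square mult_ac)
  qed
  with descent inner variance show ?thesis
    by (simp add: algebra_simps)
qed

definition "expected_loss t k = (\<integral>\<omega>. Fglob (Wb t k \<omega>) \<partial>M)"
definition "expected_grad_sq t k = (\<integral>\<omega>. (norm (grad_avg t k \<omega>))\<^sup>2 \<partial>M)"

lemma expected_loss_initial: "expected_loss 0 0 = Fglob w0"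
  by (simp add: expected_loss_def Wb_eq W_0 start_def sum_P_scaleR_const prob_space)

lemma expected_loss_final_ge: "expected_loss T 0 \<ge> finf"
proof -
  obtain T' where T': "T = Suc T'" using T by (cases T) auto
  have "expected_loss T 0 = (\<integral>\<omega>. Fglob (Wb T' E \<omega>) \<partial>M)"
    by (simp add: expected_loss_def T' Wb_next_round)
  also have "\<dots> \<ge> (\<integral>\<omega>. finf \<partial>M)"
    using integrable_Fglob_comp[OF sq_integrable_Wb[of T' E]] T' lower
    by (intro integral_mono) (auto simp: Fglob_def P_def)
  finally show ?thesis by (simp add: prob_space)
qed

lemma telescoped_descent:
  "\<gamma> * (\<Sum>t<T. \<Sum>k<E. expected_grad_sq t k) \<le> 2 * (Fglob w0 - finf)
     + real T * real E * (\<gamma> * L\<^sup>2 * ((3 * \<beta>\<^sup>2 + 3 + 12 * (1 - \<beta>)\<^sup>2) * (\<gamma>\<^sup>2 * ((real E)\<^sup>2 * Gb\<^sup>2)))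
                         + L * \<gamma>\<^sup>2 * ((\<Sum>i<C. (P i)\<^sup>2) * \<sigma>\<^sup>2))"
proof -
  define Z where "Z = \<gamma> * L\<^sup>2 * ((3 * \<beta>\<^sup>2 + 3 + 12 * (1 - \<beta>)\<^sup>2) * (\<gamma>\<^sup>2 * ((real E)\<^sup>2 * Gb\<^sup>2)))
    + L * \<gamma>\<^sup>2 * ((\<Sum>i<C. (P i)\<^sup>2) * \<sigma>\<^sup>2)"
  have step: "\<gamma> * expected_grad_sq t k \<le> 2 * (expected_loss t k - expected_loss t (Suc k)) + Z"
    if t: "t < T" and k: "k < E" for t k
  proof -
    have "\<gamma> * L\<^sup>2 * (\<integral>\<omega>. dispersion t k \<omega> \<partial>M)
        \<le> \<gamma> * L\<^sup>2 * ((3 * \<beta>\<^sup>2 + 3 + 12 * (1 - \<beta>)\<^sup>2) * (\<gamma>\<^sup>2 * ((real E)\<^sup>2 * Gb\<^sup>2)))"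
      using integral_dispersion_le(2)[OF t k] gamma_pos by (intro mult_left_mono) auto
    with one_step_descent[OF t k] show ?thesis
      unfolding expected_grad_sq_def expected_loss_def Z_def by linarith
  qed
  have "\<gamma> * (\<Sum>t<T. \<Sum>k<E. expected_grad_sq t k) \<le> (\<Sum>t<T. \<Sum>k<E. 2 * (expected_loss t k - expected_loss t (Suc k)) + Z)"
    unfolding sum_distrib_left using step by (intro sum_mono) auto
  also have "\<dots> = (\<Sum>t<T. 2 * (expected_loss t 0 - expected_loss (Suc t) 0) + real E * Z)"
  proof (rule sum.cong[OF refl])
    fix t
    have "(\<Sum>k<E. expected_loss t k - expected_loss t (Suc k)) = expected_loss t 0 - expected_loss (Suc t) 0"
      using sum_lessThan_telescope'[where f = "expected_loss t" and m = E]
      by (simp add: expected_loss_def Wb_next_round)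
    then show "(\<Sum>k<E. 2 * (expected_loss t k - expected_loss t (Suc k)) + Z)
        = 2 * (expected_loss t 0 - expected_loss (Suc t) 0) + real E * Z"
      unfolding sum.distrib sum_distrib_left[symmetric] by simp
  qed
  also have "\<dots> = 2 * (expected_loss 0 0 - expected_loss T 0) + real T * real E * Z"
    using sum_lessThan_telescope'[where f = "\<lambda>t. expected_loss t 0" and m = T]
    unfolding sum.distrib sum_distrib_left[symmetric] by simp
  also have "\<dots> \<le> 2 * (Fglob w0 - finf) + real T * real E * Z"
    using expected_loss_initial expected_loss_final_ge by simp
  finally show ?thesis unfolding Z_def .
qed

lemma convergence_bound:
  "(\<forall>t<T. \<forall>k<E. integrable M (\<lambda>\<omega>. (norm (\<Sum>i<C. pw p C i *\<^sub>R
        gradF i (avg_iter C p \<beta> \<gamma> E G w0 (\<lambda>i t k. xi i t k \<omega>) t k)))\<^sup>2)) \<and>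
   measure_pmf.expectation (pmf_of_set ({..<T} \<times> {..<E}))
     (\<lambda>(t, k). \<integral>\<omega>. (norm (\<Sum>i<C. pw p C i *\<^sub>R
        gradF i (avg_iter C p \<beta> \<gamma> E G w0 (\<lambda>i t k. xi i t k \<omega>) t k)))\<^sup>2 \<partial>M)
   \<le> 1 / sqrt (real T) *
       (4 * L * ((\<Sum>i<C. pw p C i * F i w0) - finf) / sqrt (real E)
        + (\<Sum>i<C. (pw p C i)\<^sup>2) * \<sigma>\<^sup>2 / (2 * sqrt (real E)))
     + real E * Gb\<^sup>2 / real T * (4 + (1 - \<beta>)\<^sup>2 + 8 * (1 - 1 / \<beta>)\<^sup>2)"
proof -
  have grad_avg_eq: "(\<Sum>i<C. pw p C i *\<^sub>R gradF i (avg_iter C p \<beta> \<gamma> E G w0 (\<lambda>i t k. xi i t k \<omega>) t k))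
      = grad_avg t k \<omega>" for t k \<omega>
    by (simp add: grad_avg_def grad_Fglob_def Wb_def sample_def P_def)
  have "measure_pmf.expectation (pmf_of_set ({..<T} \<times> {..<E})) (\<lambda>(t, k). expected_grad_sq t k)
      = (\<Sum>t<T. \<Sum>k<E. expected_grad_sq t k) / (real T * real E)"
    using T E by (intro expectation_pmf_of_set_grid) auto
  also have "\<dots> \<le> 1 / sqrt (real T) * (4 * L * (Fglob w0 - finf) / sqrt (real E)
        + (\<Sum>i<C. (P i)\<^sup>2) * \<sigma>\<^sup>2 / (2 * sqrt (real E)))
      + real E * Gb\<^sup>2 / real T * (4 + (1 - \<beta>)\<^sup>2 + 8 * (1 - 1 / \<beta>)\<^sup>2)"
    using T E L \<gamma> \<beta> telescoped_descent by (intro convergence_rate_arith) auto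
  finally have "measure_pmf.expectation (pmf_of_set ({..<T} \<times> {..<E})) (\<lambda>(t, k). expected_grad_sq t k)
      \<le> 1 / sqrt (real T) * (4 * L * (Fglob w0 - finf) / sqrt (real E)
        + (\<Sum>i<C. (P i)\<^sup>2) * \<sigma>\<^sup>2 / (2 * sqrt (real E)))
      + real E * Gb\<^sup>2 / real T * (4 + (1 - \<beta>)\<^sup>2 + 8 * (1 - 1 / \<beta>)\<^sup>2)" .
  moreover have "\<forall>t<T. \<forall>k<E. integrable M (\<lambda>\<omega>. (norm (grad_avg t k \<omega>))\<^sup>2)"
    using sq_integrable_averages(1) sq_integrableD(2) by blast
  ultimately show ?thesis
    unfolding grad_avg_eq expected_grad_sq_def Fglob_def P_def by simp
qed

end

theorem theorem4:
  fixes M :: "'a measure" and X :: "'x measure"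
    and C E T :: nat and p :: "nat \<Rightarrow> nat \<Rightarrow> real"
    and F :: "nat \<Rightarrow> 'v::euclidean_space \<Rightarrow> real" and gradF :: "nat \<Rightarrow> 'v \<Rightarrow> 'v"
    and G :: "nat \<Rightarrow> 'v \<Rightarrow> 'x \<Rightarrow> 'v" and xi :: "nat \<Rightarrow> nat \<Rightarrow> nat \<Rightarrow> 'a \<Rightarrow> 'x"
    and w0 :: 'v and \<beta> \<gamma> L \<sigma> Gb finf :: real
  assumes M: "prob_space M"
    and p_nonneg: "\<And>i n. i < C \<Longrightarrow> n < C \<Longrightarrow> p i n \<ge> 0"
    and p_sym: "\<And>i n. i < C \<Longrightarrow> n < C \<Longrightarrow> p i n = p n i"
    and p_diag: "\<And>i. i < C \<Longrightarrow> p i i = 0"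
    and p_sum: "(\<Sum>i<C. \<Sum>n<C. p i n) = 1"
    and p_pos: "\<And>i. i < C \<Longrightarrow> pw p C i > 0"
    and \<beta>: "0 < \<beta>" "\<beta> < 1"
    and E: "E \<ge> 1" and T: "T \<ge> 1"
    and L: "L > 0"
    and \<gamma>: "\<gamma> = 1 / (2 * L * sqrt (real T * real E))"
    and grad: "\<And>i x. i < C \<Longrightarrow> (F i has_derivative (\<lambda>h. gradF i x \<bullet> h)) (at x)"
    and smooth: "\<And>i x y. i < C \<Longrightarrow> norm (gradF i x - gradF i y) \<le> L * norm (x - y)"
    and lower: "\<And>x. (\<Sum>i<C. pw p C i * F i x) \<ge> finf"
    and xi_meas: "\<And>i t k. i < C \<Longrightarrow> t < T \<Longrightarrow> k < E \<Longrightarrow> xi i t k \<in> M \<rightarrow>\<^sub>M X"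
    and xi_indep: "prob_space.indep_vars M (\<lambda>_. X) (\<lambda>(i, t, k). xi i t k)
                     ({..<C} \<times> {..<T} \<times> {..<E})"
    and G_meas: "\<And>i. i < C \<Longrightarrow> (\<lambda>(w, x). G i w x) \<in> borel \<Otimes>\<^sub>M X \<rightarrow>\<^sub>M borel"
    and unbiased: "\<And>i t k w. i < C \<Longrightarrow> t < T \<Longrightarrow> k < E \<Longrightarrow>
        integrable M (\<lambda>\<omega>. G i w (xi i t k \<omega>)) \<and>
        (\<integral>\<omega>. G i w (xi i t k \<omega>) \<partial>M) = gradF i w"
    and variance: "\<And>i t k. i < C \<Longrightarrow> t < T \<Longrightarrow> k < E \<Longrightarrow>
        (let wt = (\<lambda>\<omega>. pert_iter C p \<beta> \<gamma> E G w0 (\<lambda>i t k. xi i t k \<omega>) t i k)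
         in integrable M (\<lambda>\<omega>. (norm (G i (wt \<omega>) (xi i t k \<omega>) - gradF i (wt \<omega>)))\<^sup>2) \<and>
            (\<integral>\<omega>. (norm (G i (wt \<omega>) (xi i t k \<omega>) - gradF i (wt \<omega>)))\<^sup>2 \<partial>M) \<le> \<sigma>\<^sup>2)"
    and gnorm: "\<And>i t k. i < C \<Longrightarrow> t < T \<Longrightarrow> k < E \<Longrightarrow>
        (let wt = (\<lambda>\<omega>. pert_iter C p \<beta> \<gamma> E G w0 (\<lambda>i t k. xi i t k \<omega>) t i k)
         in integrable M (\<lambda>\<omega>. (norm (G i (wt \<omega>) (xi i t k \<omega>)))\<^sup>2) \<and>
            (\<integral>\<omega>. (norm (G i (wt \<omega>) (xi i t k \<omega>)))\<^sup>2 \<partial>M) \<le> Gb\<^sup>2)"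
  shows
    "(\<forall>t<T. \<forall>k<E. integrable M (\<lambda>\<omega>. (norm (\<Sum>i<C. pw p C i *\<^sub>R
          gradF i (avg_iter C p \<beta> \<gamma> E G w0 (\<lambda>i t k. xi i t k \<omega>) t k)))\<^sup>2)) \<and>
     measure_pmf.expectation (pmf_of_set ({..<T} \<times> {..<E}))
       (\<lambda>(t, k). \<integral>\<omega>. (norm (\<Sum>i<C. pw p C i *\<^sub>R
          gradF i (avg_iter C p \<beta> \<gamma> E G w0 (\<lambda>i t k. xi i t k \<omega>) t k)))\<^sup>2 \<partial>M)
     \<le> 1 / sqrt (real T) *
         (4 * L * ((\<Sum>i<C. pw p C i * F i w0) - finf) / sqrt (real E)
          + (\<Sum>i<C. (pw p C i)\<^sup>2) * \<sigma>\<^sup>2 / (2 * sqrt (real E)))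
       + real E * Gb\<^sup>2 / real T * (4 + (1 - \<beta>)\<^sup>2 + 8 * (1 - 1 / \<beta>)\<^sup>2)"
proof -
  interpret perturbed_fedavg M X C E T p F gradF G xi w0 \<beta> \<gamma> L \<sigma> Gb finf
    using assms by (simp add: perturbed_fedavg_def)
  show ?thesis by (rule convergence_bound)
qed

end
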